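(* There exist constants $C\ge2$, $K$ and $M$ such that for all integers $k,k'$ with $K\le k<k'\le2k$, setting $c=c(k,k')=e^{-k/2+5k'/6}$, one can transform $\cos(kx)e^{-kt}$ into $c\cos(k'y)e^{-k't}$ within $\mathbb{T}^2\times[0,C]$ via a solution $u$ of $\ddot u+\operatorname{div}(A\nabla u)=0$ with $A$ in the regularity class $R(80,60)$. Moreover, for $t\in[0,C]$, $u=f(t)\cos(kx)+g(t)\cos(k'y)$ with $f,g\in C^2$ satisfying, for $0\le\alpha\le2$, $$|f^{(\alpha)}(t)|\le Mk^{7\alpha/3}e^{-kt},\qquad|g^{(\alpha)}(t)|\le M(k')^\alpha c\,e^{-k't/3};$$ on $[0,\frac1{100}]$, $u=\cos(kx)e^{-kt}$ and $A=\mathrm{Id}$; on $[C-\frac1{100},C]$, $u=c\cos(k'y)e^{-k't}$ and $A=\mathrm{Id}$.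
   Context: $\mathbb{T}^2=(\mathbb{R}/2\pi\mathbb{Z})^2$ with coordinates $(x,y)$; $t$ the third coordinate. $\ddot u+\operatorname{div}(A\nabla u)$ means $\partial_t^2u+\sum_{i,j\in\{x,y\}}\partial_i(A_{ij}\partial_ju)$ for a real $2\times2$ matrix function $A$. "Transform $u_1$ into $u_2$ within $\mathbb{T}^2\times[T_1,T_2]$ via $u$" means: $u$ is $C^2$, $A$ is $C^1$, $\ddot u+\operatorname{div}(A\nabla u)=0$ on $\mathbb{T}^2\times\mathbb{R}$, $u=u_1$, $A=\mathrm{Id}$ for $t\le T_1$ and $u=u_2$, $A=\mathrm{Id}$ for $t\ge T_2$. Regularity class $R(\Lambda,C)$: $\Lambda^{-1}|\xi|^2\le\xi^TA\xi\le\Lambda|\xi|^2$ for all $\xi\in\mathbb{R}^2$ at every point, and the entries of $A$ are $C^1$ with all first partial derivatives in $x,y,t$ bounded by $C$ in absolute value. *)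

theory Defs
  imports "HOL-Analysis.Analysis"
begin

text \<open>Functions on T^2 x R are represented as functions F x y t of three real
variables that are 2pi-periodic in x and y.  Coordinate indices: 0 = x, 1 = y, 2 = t.\<close>

definition part :: "nat \<Rightarrow> (real \<Rightarrow> real \<Rightarrow> real \<Rightarrow> real) \<Rightarrow> real \<Rightarrow> real \<Rightarrow> real \<Rightarrow> real" where
  "part i F = (\<lambda>x y t. if i = 0 then deriv (\<lambda>s. F s y t) x
                       else if i = 1 then deriv (\<lambda>s. F x s t) y
                       else deriv (\<lambda>s. F x y s) t)"

definition has_partials :: "(real \<Rightarrow> real \<Rightarrow> real \<Rightarrow> real) \<Rightarrow> bool" where
  "has_partials F \<longleftrightarrow> (\<forall>x y t. (\<lambda>s. F s y t) differentiable (at x)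
                                \<and> (\<lambda>s. F x s t) differentiable (at y)
                                \<and> (\<lambda>s. F x y s) differentiable (at t))"

definition cont3 :: "(real \<Rightarrow> real \<Rightarrow> real \<Rightarrow> real) \<Rightarrow> bool" where
  "cont3 F \<longleftrightarrow> continuous_on UNIV (\<lambda>p::real \<times> real \<times> real. F (fst p) (fst (snd p)) (snd (snd p)))"

definition C1_fun :: "(real \<Rightarrow> real \<Rightarrow> real \<Rightarrow> real) \<Rightarrow> bool" where
  "C1_fun F \<longleftrightarrow> cont3 F \<and> has_partials F \<and> (\<forall>i<3. cont3 (part i F))"

definition C2_fun :: "(real \<Rightarrow> real \<Rightarrow> real \<Rightarrow> real) \<Rightarrow> bool" where
  "C2_fun F \<longleftrightarrow> C1_fun F \<and> (\<forall>i<3. C1_fun (part i F))"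

definition periodic2 :: "(real \<Rightarrow> real \<Rightarrow> real \<Rightarrow> real) \<Rightarrow> bool" where
  "periodic2 F \<longleftrightarrow> (\<forall>x y t. F (x + 2*pi) y t = F x y t \<and> F x (y + 2*pi) t = F x y t)"

text \<open>Matrix fields A :: nat => nat => (x,y,t) => real, entries A i j for i,j < 2.\<close>
definition idmat :: "nat \<Rightarrow> nat \<Rightarrow> real" where
  "idmat i j = (if i = j then 1 else 0)"

definition div_form ::
  "(nat \<Rightarrow> nat \<Rightarrow> real \<Rightarrow> real \<Rightarrow> real \<Rightarrow> real) \<Rightarrow> (real \<Rightarrow> real \<Rightarrow> real \<Rightarrow> real) \<Rightarrow> real \<Rightarrow> real \<Rightarrow> real \<Rightarrow> real" where
  "div_form A u x y t =
     (\<Sum>i<2. \<Sum>j<2. part i (\<lambda>x' y' t'. A i j x' y' t' * part j u x' y' t') x y t)"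

definition transforms ::
  "(real \<Rightarrow> real \<Rightarrow> real \<Rightarrow> real) \<Rightarrow> (real \<Rightarrow> real \<Rightarrow> real \<Rightarrow> real) \<Rightarrow> real \<Rightarrow> real \<Rightarrow>
   (real \<Rightarrow> real \<Rightarrow> real \<Rightarrow> real) \<Rightarrow> (nat \<Rightarrow> nat \<Rightarrow> real \<Rightarrow> real \<Rightarrow> real \<Rightarrow> real) \<Rightarrow> bool" where
  "transforms u1 u2 T1 T2 u A \<longleftrightarrow>
     C2_fun u \<and> periodic2 u \<and>
     (\<forall>i<2. \<forall>j<2. C1_fun (A i j) \<and> periodic2 (A i j)) \<and>
     (\<forall>x y t. part 2 (part 2 u) x y t + div_form A u x y t = 0) \<and>
     (\<forall>x y t. t \<le> T1 \<longrightarrow> u x y t = u1 x y t \<and> (\<forall>i<2. \<forall>j<2. A i j x y t = idmat i j)) \<and>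
     (\<forall>x y t. t \<ge> T2 \<longrightarrow> u x y t = u2 x y t \<and> (\<forall>i<2. \<forall>j<2. A i j x y t = idmat i j))"

definition regclass :: "real \<Rightarrow> real \<Rightarrow> (nat \<Rightarrow> nat \<Rightarrow> real \<Rightarrow> real \<Rightarrow> real \<Rightarrow> real) \<Rightarrow> bool" where
  "regclass Lam Cb A \<longleftrightarrow>
     (\<forall>x y t. \<forall>\<xi>::nat \<Rightarrow> real.
        (1 / Lam) * ((\<xi> 0)\<^sup>2 + (\<xi> 1)\<^sup>2) \<le> (\<Sum>i<2. \<Sum>j<2. \<xi> i * A i j x y t * \<xi> j) \<and>
        (\<Sum>i<2. \<Sum>j<2. \<xi> i * A i j x y t * \<xi> j) \<le> Lam * ((\<xi> 0)\<^sup>2 + (\<xi> 1)\<^sup>2)) \<and>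
     (\<forall>i<2. \<forall>j<2. C1_fun (A i j) \<and> (\<forall>l<3. \<forall>x y t. \<bar>part l (A i j) x y t\<bar> \<le> Cb))"

end

theory Submission
  imports Defs
begin

text \<open>
  Separation of variables: u = f(t) cos(kx) + g(t) cos(k'y). A coefficient field that is diagonal up to
  terms in cos(kx) cos(k'y) and sin(kx) sin(k'y) maps this two-mode form to itself, and the equation
  becomes the linear system f'' = a k^2 f + S g, g'' = b k'^2 g + R f.
  Take f = phi e^(-k Psi) and g = c psi e^(-k' Phi): psi switches the y-mode on during [1/10, 11/10],
  phi switches the x-mode off during [71/10, 38/5], and the phases Psi, Phi have slope 1 on these
  windows. Then a and b are determined by Psi and Phi alone, while R and S absorb the derivatives of
  psi and phi. On the switching windows the ratio of the two modes is at most e^(-k/30) (this is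
  where c = e^(-k/2 + 5k'/6), the jump of Psi by 8 and the drop of Phi by 3/5 enter), which beats the
  polynomial size of the switching terms, so the coupling is negligible and A stays uniformly elliptic
  with bounded derivatives.
\<close>

section \<open>A C^3 smooth step\<close>

lemma has_real_derivative_if_le:
  fixes g h :: "real \<Rightarrow> real"
  assumes g: "(g has_real_derivative D) (at a)" and h: "(h has_real_derivative D) (at a)"
    and eq: "g a = h a"
  shows "((\<lambda>x. if x \<le> a then g x else h x) has_real_derivative D) (at a)"
proof -
  let ?F = "\<lambda>x. if x \<le> a then g x else h x"
  have gl: "((\<lambda>e. (g (a + e) - g a) / e) \<longlongrightarrow> D) (at 0)" using g by (simp add: DERIV_def)
  have hl: "((\<lambda>e. (h (a + e) - h a) / e) \<longlongrightarrow> D) (at 0)" using h by (simp add: DERIV_def)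
  have left: "((\<lambda>e. (?F (a + e) - ?F a) / e) \<longlongrightarrow> D) (at_left 0)"
  proof (rule tendsto_cong[THEN iffD1, OF _ tendsto_mono[OF at_le[OF subset_UNIV] gl]])
    show "\<forall>\<^sub>F e in at_left 0. (g (a + e) - g a) / e = (?F (a + e) - ?F a) / e"
      by (auto simp: eventually_at_left_field intro!: exI[of _ "-1"])
  qed
  have right: "((\<lambda>e. (?F (a + e) - ?F a) / e) \<longlongrightarrow> D) (at_right 0)"
  proof (rule tendsto_cong[THEN iffD1, OF _ tendsto_mono[OF at_le[OF subset_UNIV] hl]])
    show "\<forall>\<^sub>F e in at_right 0. (h (a + e) - h a) / e = (?F (a + e) - ?F a) / e"
      using eq by (auto simp: eventually_at_right_field intro!: exI[of _ "1"])
  qed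
  show ?thesis unfolding DERIV_def by (rule filterlim_split_at[OF left right])
qed

definition const_extend :: "(real \<Rightarrow> real) \<Rightarrow> real \<Rightarrow> real \<Rightarrow> real \<Rightarrow> real" where
  "const_extend P lo hi x = (if x \<le> 0 then lo else if x \<le> 1 then P x else hi)"

lemma const_extend_has_derivative:
  assumes P: "\<And>x. (P has_real_derivative P' x) (at x)"
    and "P 0 = lo" "P 1 = hi" "P' 0 = 0" "P' 1 = 0"
  shows "(const_extend P lo hi has_real_derivative const_extend P' 0 0 x) (at x)"
proof -
  consider "x < 0" | "x = 0" | "0 < x \<and> x < 1" | "x = 1" | "x > 1" by linarith
  then show ?thesis
  proof cases
    case 1
    have "((\<lambda>_. lo) has_real_derivative 0) (at x)" by simp
    then have "(const_extend P lo hi has_real_derivative 0) (at x)"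
      by (rule has_field_derivative_transform_within_open[of _ _ _ "{..<0}"])
         (use 1 in \<open>auto simp: const_extend_def\<close>)
    then show ?thesis using 1 by (simp add: const_extend_def)
  next
    case 2
    have "((\<lambda>x. if x \<le> 1 then P x else hi) has_real_derivative 0) (at 0)"
      by (rule has_field_derivative_transform_within_open[of P _ _ "{..<1}"])
         (use P[of 0] assms in auto)
    then have "((\<lambda>x. if x \<le> 0 then lo else if x \<le> 1 then P x else hi) has_real_derivative 0) (at 0)"
      using has_real_derivative_if_le[of "\<lambda>_. lo" 0 0] assms by simp
    then show ?thesis using 2 by (simp add: const_extend_def[abs_def])
  next
    case 3
    have "(const_extend P lo hi has_real_derivative P' x) (at x)"
      by (rule has_field_derivative_transform_within_open[OF P, of "{0<..<1}"])
         (use 3 in \<open>auto simp: const_extend_def\<close>)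
    then show ?thesis using 3 by (simp add: const_extend_def)
  next
    case 4
    have "((\<lambda>x. if x \<le> 0 then lo else P x) has_real_derivative 0) (at 1)"
      by (rule has_field_derivative_transform_within_open[of P _ _ "{0<..}"])
         (use P[of 1] assms in auto)
    then have "((\<lambda>x. if x \<le> 1 then if x \<le> 0 then lo else P x else hi) has_real_derivative 0) (at 1)"
      using has_real_derivative_if_le[of _ 0 1 "\<lambda>_. hi"] assms by simp
    moreover have "(\<lambda>x. if x \<le> 1 then if x \<le> 0 then lo else P x else hi) = const_extend P lo hi"
      by (auto simp: const_extend_def fun_eq_iff)
    ultimately show ?thesis using 4 assms by (simp add: const_extend_def)
  next
    case 5
    have "((\<lambda>_. hi) has_real_derivative 0) (at x)" by simp
    then have "(const_extend P lo hi has_real_derivative 0) (at x)"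
      by (rule has_field_derivative_transform_within_open[of _ _ _ "{1<..}"])
         (use 5 in \<open>auto simp: const_extend_def\<close>)
    then show ?thesis using 5 by (simp add: const_extend_def)
  qed
qed

lemma continuous_on_const_extend:
  assumes "continuous_on UNIV P" "P 0 = lo" "P 1 = hi"
  shows "continuous_on UNIV (const_extend P lo hi)"
proof -
  have "const_extend P lo hi = (\<lambda>x. P (max 0 (min 1 x)))"
    using assms by (auto simp: const_extend_def fun_eq_iff)
  moreover have "continuous_on UNIV (\<lambda>x. P (max 0 (min 1 x)))"
    by (rule continuous_on_compose2[OF assms(1)]) (auto intro!: continuous_intros)
  ultimately show ?thesis by simp
qed

text \<open>The degree 7 smoothstep: it rises from 0 to 1 on [0,1] and its derivatives of order 1 to 3
  vanish at both ends, so its constant extension is C^3.\<close>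
definition step_poly :: "real \<Rightarrow> real" where
  "step_poly x = 35*x^4 - 84*x^5 + 70*x^6 - 20*x^7"
definition step_poly' :: "real \<Rightarrow> real" where
  "step_poly' x = 140*x^3 - 420*x^4 + 420*x^5 - 140*x^6"
definition step_poly'' :: "real \<Rightarrow> real" where
  "step_poly'' x = 420*x^2 - 1680*x^3 + 2100*x^4 - 840*x^5"
definition step_poly''' :: "real \<Rightarrow> real" where
  "step_poly''' x = 840*x - 5040*x^2 + 8400*x^3 - 4200*x^4"

lemma step_poly_has_derivative:
  "(step_poly has_real_derivative step_poly' x) (at x)"
  "(step_poly' has_real_derivative step_poly'' x) (at x)"
  "(step_poly'' has_real_derivative step_poly''' x) (at x)"
  unfolding step_poly_def[abs_def] step_poly'_def[abs_def] step_poly''_def[abs_def] step_poly'''_def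
  by (auto intro!: derivative_eq_intros simp: algebra_simps)

lemma step_poly_derivs_factored:
  "step_poly' x = 140 * (x*(1-x))^3"
  "step_poly'' x = 420 * (x*(1-x))^2 * (1 - 2*x)"
  "step_poly''' x = 840 * (x*(1-x)) * (1 - 5*(x*(1-x)))"
  unfolding step_poly'_def step_poly''_def step_poly'''_def by algebra+

definition smooth_step :: "real \<Rightarrow> real" where "smooth_step = const_extend step_poly 0 1"
definition smooth_step' :: "real \<Rightarrow> real" where "smooth_step' = const_extend step_poly' 0 0"
definition smooth_step'' :: "real \<Rightarrow> real" where "smooth_step'' = const_extend step_poly'' 0 0"
definition smooth_step''' :: "real \<Rightarrow> real" where "smooth_step''' = const_extend step_poly''' 0 0"

lemma smooth_step_has_derivative:
  "(smooth_step has_real_derivative smooth_step' x) (at x)"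
  "(smooth_step' has_real_derivative smooth_step'' x) (at x)"
  "(smooth_step'' has_real_derivative smooth_step''' x) (at x)"
  unfolding smooth_step_def smooth_step'_def smooth_step''_def smooth_step'''_def
  by (rule const_extend_has_derivative[OF step_poly_has_derivative(1)]
      const_extend_has_derivative[OF step_poly_has_derivative(2)]
      const_extend_has_derivative[OF step_poly_has_derivative(3)];
      simp add: step_poly_def step_poly'_def step_poly''_def step_poly'''_def)+

lemma smooth_step_chain [derivative_intros]:
  "(h has_real_derivative h') (at x within S) \<Longrightarrow>
     ((\<lambda>x. smooth_step (h x)) has_real_derivative smooth_step' (h x) * h') (at x within S)"
  "(h has_real_derivative h') (at x within S) \<Longrightarrow>
     ((\<lambda>x. smooth_step' (h x)) has_real_derivative smooth_step'' (h x) * h') (at x within S)"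
  "(h has_real_derivative h') (at x within S) \<Longrightarrow>
     ((\<lambda>x. smooth_step'' (h x)) has_real_derivative smooth_step''' (h x) * h') (at x within S)"
  by (erule DERIV_chain', rule smooth_step_has_derivative)+

lemma continuous_on_smooth_step''' [continuous_intros]:
  assumes "continuous_on S h"
  shows "continuous_on S (\<lambda>x. smooth_step''' (h x))"
proof -
  have "continuous_on UNIV smooth_step'''"
    unfolding smooth_step'''_def
    by (rule continuous_on_const_extend) (auto simp: step_poly'''_def intro!: continuous_intros)
  then show ?thesis by (rule continuous_on_compose2[OF _ assms]) auto
qed

lemma smooth_step_eq_0: "x \<le> 0 \<Longrightarrow> smooth_step x = 0"
  by (simp add: smooth_step_def const_extend_def)

lemma smooth_step_eq_1: "1 \<le> x \<Longrightarrow> smooth_step x = 1"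
  by (simp add: smooth_step_def const_extend_def step_poly_def)

lemma smooth_step_derivs_eq_0:
  "x \<le> 0 \<or> 1 \<le> x \<Longrightarrow> smooth_step' x = 0 \<and> smooth_step'' x = 0 \<and> smooth_step''' x = 0"
  by (auto simp: smooth_step'_def smooth_step''_def smooth_step'''_def const_extend_def
      step_poly'_def step_poly''_def step_poly'''_def)

lemma mult_one_minus_bounds:
  fixes x :: real
  assumes "0 \<le> x" "x \<le> 1"
  shows "0 \<le> x*(1-x)" "x*(1-x) \<le> 1/4"
proof -
  show "0 \<le> x*(1-x)" using assms by simp
  show "x*(1-x) \<le> 1/4" using zero_le_power2[of "x - 1/2"] by (simp add: power2_eq_square algebra_simps)
qed

lemma smooth_step'_bounds: "0 \<le> smooth_step' x \<and> smooth_step' x \<le> 35/16"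
proof (cases "0 < x \<and> x < 1")
  case True
  then have q: "0 \<le> x*(1-x)" "x*(1-x) \<le> 1/4" using mult_one_minus_bounds[of x] by auto
  have "smooth_step' x = 140 * (x*(1-x))^3"
    using True by (simp add: smooth_step'_def const_extend_def step_poly_derivs_factored)
  moreover have "(x*(1-x))^3 \<le> (1/4)^3" using q by (intro power_mono) auto
  ultimately show ?thesis using q by (simp add: power_divide)
qed (use smooth_step_derivs_eq_0 in force)

lemma abs_smooth_step''_le: "\<bar>smooth_step'' x\<bar> \<le> 105/4"
proof (cases "0 < x \<and> x < 1")
  case True
  then have q: "0 \<le> x*(1-x)" "x*(1-x) \<le> 1/4" using mult_one_minus_bounds[of x] by auto
  have "\<bar>smooth_step'' x\<bar> = 420 * (x*(1-x))^2 * \<bar>1 - 2*x\<bar>"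
    using True by (simp add: smooth_step''_def const_extend_def step_poly_derivs_factored abs_mult)
  also have "\<dots> \<le> 420 * (1/4)^2 * 1"
    using True q by (intro mult_mono power_mono) auto
  finally show ?thesis by (simp add: power_divide)
qed (use smooth_step_derivs_eq_0 in force)

lemma abs_smooth_step'''_le: "\<bar>smooth_step''' x\<bar> \<le> 210"
proof (cases "0 < x \<and> x < 1")
  case True
  then have q: "0 \<le> x*(1-x)" "x*(1-x) \<le> 1/4" using mult_one_minus_bounds[of x] by auto
  have "\<bar>smooth_step''' x\<bar> = 840 * (x*(1-x)) * \<bar>1 - 5*(x*(1-x))\<bar>"
    using True q by (simp add: smooth_step'''_def const_extend_def step_poly_derivs_factored abs_mult)
  also have "\<dots> \<le> 840 * (1/4) * 1"
    using q by (intro mult_mono) auto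
  finally show ?thesis by simp
qed (use smooth_step_derivs_eq_0 in force)

lemma smooth_step_mono: "x \<le> y \<Longrightarrow> smooth_step x \<le> smooth_step y"
  by (rule DERIV_nonneg_imp_nondecreasing[of x y smooth_step])
     (use smooth_step_has_derivative(1) smooth_step'_bounds in blast)+

lemma smooth_step_bounds: "0 \<le> smooth_step x \<and> smooth_step x \<le> 1"
  using smooth_step_mono[of 0 x] smooth_step_mono[of x 1] smooth_step_mono[of x 0] smooth_step_mono[of 1 x]
  by (cases "x \<le> 0"; cases "x \<le> 1") (auto simp: smooth_step_eq_0 smooth_step_eq_1)

section \<open>Time profiles\<close>

definition psi :: "real \<Rightarrow> real" where "psi t = smooth_step (t - 1/10)"
definition psi' :: "real \<Rightarrow> real" where "psi' t = smooth_step' (t - 1/10)"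
definition psi'' :: "real \<Rightarrow> real" where "psi'' t = smooth_step'' (t - 1/10)"
definition psi''' :: "real \<Rightarrow> real" where "psi''' t = smooth_step''' (t - 1/10)"

definition Psi :: "real \<Rightarrow> real" where "Psi t = t + 8 * smooth_step ((t - 11/10)/6)"
definition Psi' :: "real \<Rightarrow> real" where "Psi' t = 1 + 4/3 * smooth_step' ((t - 11/10)/6)"
definition Psi'' :: "real \<Rightarrow> real" where "Psi'' t = 2/9 * smooth_step'' ((t - 11/10)/6)"
definition Psi''' :: "real \<Rightarrow> real" where "Psi''' t = 1/27 * smooth_step''' ((t - 11/10)/6)"

definition phi :: "real \<Rightarrow> real" where "phi t = 1 - smooth_step (2*t - 71/5)"
definition phi' :: "real \<Rightarrow> real" where "phi' t = -2 * smooth_step' (2*t - 71/5)"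
definition phi'' :: "real \<Rightarrow> real" where "phi'' t = -4 * smooth_step'' (2*t - 71/5)"
definition phi''' :: "real \<Rightarrow> real" where "phi''' t = -8 * smooth_step''' (2*t - 71/5)"

definition Phi :: "real \<Rightarrow> real" where "Phi t = t + 3/5 - 3/5 * smooth_step ((t - 38/5)/2)"
definition Phi' :: "real \<Rightarrow> real" where "Phi' t = 1 - 3/10 * smooth_step' ((t - 38/5)/2)"
definition Phi'' :: "real \<Rightarrow> real" where "Phi'' t = -3/20 * smooth_step'' ((t - 38/5)/2)"
definition Phi''' :: "real \<Rightarrow> real" where "Phi''' t = -3/40 * smooth_step''' ((t - 38/5)/2)"

lemma profile_has_derivative:
  "(psi has_real_derivative psi' t) (at t within S)"
  "(psi' has_real_derivative psi'' t) (at t within S)"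
  "(psi'' has_real_derivative psi''' t) (at t within S)"
  "(Psi has_real_derivative Psi' t) (at t within S)"
  "(Psi' has_real_derivative Psi'' t) (at t within S)"
  "(Psi'' has_real_derivative Psi''' t) (at t within S)"
  "(phi has_real_derivative phi' t) (at t within S)"
  "(phi' has_real_derivative phi'' t) (at t within S)"
  "(phi'' has_real_derivative phi''' t) (at t within S)"
  "(Phi has_real_derivative Phi' t) (at t within S)"
  "(Phi' has_real_derivative Phi'' t) (at t within S)"
  "(Phi'' has_real_derivative Phi''' t) (at t within S)"
  unfolding psi_def[abs_def] psi'_def[abs_def] psi''_def[abs_def] psi'''_def
    Psi_def[abs_def] Psi'_def[abs_def] Psi''_def[abs_def] Psi'''_def
    phi_def[abs_def] phi'_def[abs_def] phi''_def[abs_def] phi'''_def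
    Phi_def[abs_def] Phi'_def[abs_def] Phi''_def[abs_def] Phi'''_def
  by (auto intro!: derivative_eq_intros)

lemma profile_chain [derivative_intros]:
  "(h has_real_derivative h') (at x within S) \<Longrightarrow> ((\<lambda>x. psi (h x)) has_real_derivative psi' (h x) * h') (at x within S)"
  "(h has_real_derivative h') (at x within S) \<Longrightarrow> ((\<lambda>x. psi' (h x)) has_real_derivative psi'' (h x) * h') (at x within S)"
  "(h has_real_derivative h') (at x within S) \<Longrightarrow> ((\<lambda>x. psi'' (h x)) has_real_derivative psi''' (h x) * h') (at x within S)"
  "(h has_real_derivative h') (at x within S) \<Longrightarrow> ((\<lambda>x. Psi (h x)) has_real_derivative Psi' (h x) * h') (at x within S)"
  "(h has_real_derivative h') (at x within S) \<Longrightarrow> ((\<lambda>x. Psi' (h x)) has_real_derivative Psi'' (h x) * h') (at x within S)"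
  "(h has_real_derivative h') (at x within S) \<Longrightarrow> ((\<lambda>x. Psi'' (h x)) has_real_derivative Psi''' (h x) * h') (at x within S)"
  "(h has_real_derivative h') (at x within S) \<Longrightarrow> ((\<lambda>x. phi (h x)) has_real_derivative phi' (h x) * h') (at x within S)"
  "(h has_real_derivative h') (at x within S) \<Longrightarrow> ((\<lambda>x. phi' (h x)) has_real_derivative phi'' (h x) * h') (at x within S)"
  "(h has_real_derivative h') (at x within S) \<Longrightarrow> ((\<lambda>x. phi'' (h x)) has_real_derivative phi''' (h x) * h') (at x within S)"
  "(h has_real_derivative h') (at x within S) \<Longrightarrow> ((\<lambda>x. Phi (h x)) has_real_derivative Phi' (h x) * h') (at x within S)"
  "(h has_real_derivative h') (at x within S) \<Longrightarrow> ((\<lambda>x. Phi' (h x)) has_real_derivative Phi'' (h x) * h') (at x within S)"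
  "(h has_real_derivative h') (at x within S) \<Longrightarrow> ((\<lambda>x. Phi'' (h x)) has_real_derivative Phi''' (h x) * h') (at x within S)"
  by (erule DERIV_chain', rule profile_has_derivative)+

lemma continuous_on_profile [continuous_intros]:
  "continuous_on S psi" "continuous_on S psi'" "continuous_on S psi''"
  "continuous_on S Psi" "continuous_on S Psi'" "continuous_on S Psi''"
  "continuous_on S phi" "continuous_on S phi'" "continuous_on S phi''"
  "continuous_on S Phi" "continuous_on S Phi'" "continuous_on S Phi''"
  by (rule DERIV_continuous_on, rule profile_has_derivative)+

lemma continuous_on_profile''' [continuous_intros]:
  "continuous_on S psi'''" "continuous_on S Psi'''" "continuous_on S phi'''" "continuous_on S Phi'''"
  unfolding psi'''_def[abs_def] Psi'''_def[abs_def] phi'''_def[abs_def] Phi'''_def[abs_def]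
  by (auto intro!: continuous_intros)

lemmas smooth_step_flat = smooth_step_eq_0 smooth_step_eq_1 smooth_step_derivs_eq_0

lemma psi_off: "t \<le> 1/10 \<Longrightarrow> psi t = 0 \<and> psi' t = 0 \<and> psi'' t = 0 \<and> psi''' t = 0"
  by (simp add: psi_def psi'_def psi''_def psi'''_def smooth_step_flat)
lemma psi_on: "11/10 \<le> t \<Longrightarrow> psi t = 1 \<and> psi' t = 0 \<and> psi'' t = 0 \<and> psi''' t = 0"
  by (simp add: psi_def psi'_def psi''_def psi'''_def smooth_step_flat)
lemma Psi_early: "t \<le> 11/10 \<Longrightarrow> Psi t = t \<and> Psi' t = 1 \<and> Psi'' t = 0 \<and> Psi''' t = 0"
  by (simp add: Psi_def Psi'_def Psi''_def Psi'''_def smooth_step_flat)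
lemma Psi_late: "71/10 \<le> t \<Longrightarrow> Psi t = t + 8 \<and> Psi' t = 1 \<and> Psi'' t = 0 \<and> Psi''' t = 0"
  by (simp add: Psi_def Psi'_def Psi''_def Psi'''_def smooth_step_flat)
lemma phi_on: "t \<le> 71/10 \<Longrightarrow> phi t = 1 \<and> phi' t = 0 \<and> phi'' t = 0 \<and> phi''' t = 0"
  by (simp add: phi_def phi'_def phi''_def phi'''_def smooth_step_flat)
lemma phi_off: "38/5 \<le> t \<Longrightarrow> phi t = 0 \<and> phi' t = 0 \<and> phi'' t = 0 \<and> phi''' t = 0"
  by (simp add: phi_def phi'_def phi''_def phi'''_def smooth_step_flat)
lemma Phi_early: "t \<le> 38/5 \<Longrightarrow> Phi t = t + 3/5 \<and> Phi' t = 1 \<and> Phi'' t = 0 \<and> Phi''' t = 0"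
  by (simp add: Phi_def Phi'_def Phi''_def Phi'''_def smooth_step_flat)
lemma Phi_late: "48/5 \<le> t \<Longrightarrow> Phi t = t \<and> Phi' t = 1 \<and> Phi'' t = 0 \<and> Phi''' t = 0"
  by (simp add: Phi_def Phi'_def Phi''_def Phi'''_def smooth_step_flat)

lemma psi_bounds:
  "0 \<le> psi t \<and> psi t \<le> 1" "0 \<le> psi' t \<and> psi' t \<le> 35/16" "\<bar>psi'' t\<bar> \<le> 105/4" "\<bar>psi''' t\<bar> \<le> 210"
  using smooth_step_bounds smooth_step'_bounds abs_smooth_step''_le abs_smooth_step'''_le
  by (auto simp: psi_def psi'_def psi''_def psi'''_def)

lemma phi_bounds:
  "0 \<le> phi t \<and> phi t \<le> 1" "\<bar>phi' t\<bar> \<le> 35/8" "\<bar>phi'' t\<bar> \<le> 105" "\<bar>phi''' t\<bar> \<le> 1680"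
  using smooth_step_bounds[of "2*t - 71/5"] smooth_step'_bounds[of "2*t - 71/5"]
    abs_smooth_step''_le[of "2*t - 71/5"] abs_smooth_step'''_le[of "2*t - 71/5"]
  by (auto simp: phi_def phi'_def phi''_def phi'''_def abs_mult)

lemma Psi_bounds:
  "t \<le> Psi t" "1 \<le> Psi' t \<and> Psi' t \<le> 47/12" "\<bar>Psi'' t\<bar> \<le> 35/6" "\<bar>Psi''' t\<bar> \<le> 70/9"
  using smooth_step_bounds[of "(t - 11/10)/6"] smooth_step'_bounds[of "(t - 11/10)/6"]
    abs_smooth_step''_le[of "(t - 11/10)/6"] abs_smooth_step'''_le[of "(t - 11/10)/6"]
  by (auto simp: Psi_def Psi'_def Psi''_def Psi'''_def abs_mult)

lemma Phi_bounds:
  "t \<le> Phi t" "11/32 \<le> Phi' t \<and> Phi' t \<le> 1" "\<bar>Phi'' t\<bar> \<le> 63/16" "\<bar>Phi''' t\<bar> \<le> 63/4"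
  using smooth_step_bounds[of "(t - 38/5)/2"] smooth_step'_bounds[of "(t - 38/5)/2"]
    abs_smooth_step''_le[of "(t - 38/5)/2"] abs_smooth_step'''_le[of "(t - 38/5)/2"]
  by (auto simp: Phi_def Phi'_def Phi''_def Phi'''_def abs_mult)

section \<open>Amplitudes and the reduced system\<close>

definition c_coef :: "real \<Rightarrow> real \<Rightarrow> real" where "c_coef k k' = exp (- k/2 + 5*k'/6)"

definition f_amp :: "real \<Rightarrow> real \<Rightarrow> real" where
  "f_amp k t = phi t * exp (- k * Psi t)"
definition f_amp' :: "real \<Rightarrow> real \<Rightarrow> real" where
  "f_amp' k t = (phi' t - k * Psi' t * phi t) * exp (- k * Psi t)"
definition f_amp'' :: "real \<Rightarrow> real \<Rightarrow> real" where
  "f_amp'' k t = (phi'' t - 2*k*Psi' t*phi' t + (k^2 * (Psi' t)^2 - k * Psi'' t) * phi t) * exp (- k * Psi t)"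

definition g_amp :: "real \<Rightarrow> real \<Rightarrow> real \<Rightarrow> real" where
  "g_amp k k' t = c_coef k k' * psi t * exp (- k' * Phi t)"
definition g_amp' :: "real \<Rightarrow> real \<Rightarrow> real \<Rightarrow> real" where
  "g_amp' k k' t = c_coef k k' * (psi' t - k' * Phi' t * psi t) * exp (- k' * Phi t)"
definition g_amp'' :: "real \<Rightarrow> real \<Rightarrow> real \<Rightarrow> real" where
  "g_amp'' k k' t = c_coef k k' * (psi'' t - 2*k'*Phi' t*psi' t + (k'^2 * (Phi' t)^2 - k' * Phi'' t) * psi t)
     * exp (- k' * Phi t)"

text \<open>The diagonal coefficients make exp(-k Psi) and exp(-k' Phi) exact solutions; cross_f and cross_g
  carry the terms created by switching phi and psi. They live on windows where the other amplitude
  is a pure exponential, which is what allows dividing by it.\<close>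
definition diag_x :: "real \<Rightarrow> real \<Rightarrow> real" where "diag_x k t = (Psi' t)^2 - Psi'' t / k"
definition diag_x' :: "real \<Rightarrow> real \<Rightarrow> real" where "diag_x' k t = 2 * Psi' t * Psi'' t - Psi''' t / k"
definition diag_y :: "real \<Rightarrow> real \<Rightarrow> real" where "diag_y k' t = (Phi' t)^2 - Phi'' t / k'"
definition diag_y' :: "real \<Rightarrow> real \<Rightarrow> real" where "diag_y' k' t = 2 * Phi' t * Phi'' t - Phi''' t / k'"

definition cross_g :: "real \<Rightarrow> real \<Rightarrow> real \<Rightarrow> real" where
  "cross_g k k' t = c_coef k k' * exp (k * Psi t - k' * Phi t) * (psi'' t - 2*k'*Phi' t*psi' t)"
definition cross_g' :: "real \<Rightarrow> real \<Rightarrow> real \<Rightarrow> real" where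
  "cross_g' k k' t = c_coef k k' * exp (k * Psi t - k' * Phi t) *
     ((k * Psi' t - k' * Phi' t) * (psi'' t - 2*k'*Phi' t*psi' t)
      + psi''' t - 2*k'*Phi'' t*psi' t - 2*k'*Phi' t*psi'' t)"
definition cross_f :: "real \<Rightarrow> real \<Rightarrow> real \<Rightarrow> real" where
  "cross_f k k' t = exp (k' * Phi t - k * Psi t) / c_coef k k' * (phi'' t - 2*k*Psi' t*phi' t)"
definition cross_f' :: "real \<Rightarrow> real \<Rightarrow> real \<Rightarrow> real" where
  "cross_f' k k' t = exp (k' * Phi t - k * Psi t) / c_coef k k' *
     ((k' * Phi' t - k * Psi' t) * (phi'' t - 2*k*Psi' t*phi' t)
      + phi''' t - 2*k*Psi'' t*phi' t - 2*k*Psi' t*phi'' t)"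

lemma c_coef_pos: "0 < c_coef k k'"
  by (simp add: c_coef_def)

lemma c_coef_nonzero [simp]: "c_coef k k' \<noteq> 0"
  by (simp add: c_coef_def)

lemma f_amp_has_derivative: "(f_amp k has_real_derivative f_amp' k t) (at t within S)"
  unfolding f_amp_def[abs_def] f_amp'_def
  by (rule derivative_eq_intros refl | simp)+ (simp add: algebra_simps)

lemma f_amp'_has_derivative: "(f_amp' k has_real_derivative f_amp'' k t) (at t within S)"
  unfolding f_amp'_def[abs_def] f_amp''_def
  by (rule derivative_eq_intros refl | simp)+ (simp add: algebra_simps power2_eq_square)

lemma g_amp_has_derivative: "(g_amp k k' has_real_derivative g_amp' k k' t) (at t within S)"
  unfolding g_amp_def[abs_def] g_amp'_def
  by (rule derivative_eq_intros refl | simp)+ (simp add: algebra_simps)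

lemma g_amp'_has_derivative: "(g_amp' k k' has_real_derivative g_amp'' k k' t) (at t within S)"
  unfolding g_amp'_def[abs_def] g_amp''_def
  by (rule derivative_eq_intros refl | simp)+ (simp add: algebra_simps power2_eq_square)

lemma diag_has_derivative:
  "(diag_x k has_real_derivative diag_x' k t) (at t within S)"
  "(diag_y k' has_real_derivative diag_y' k' t) (at t within S)"
  unfolding diag_x_def[abs_def] diag_x'_def diag_y_def[abs_def] diag_y'_def
  by (auto intro!: derivative_eq_intros simp: divide_inverse power2_eq_square algebra_simps)

lemma cross_g_has_derivative: "(cross_g k k' has_real_derivative cross_g' k k' t) (at t within S)"
  unfolding cross_g_def[abs_def] cross_g'_def
  by (rule derivative_eq_intros refl | simp)+ (simp add: algebra_simps)

lemma cross_f_has_derivative: "(cross_f k k' has_real_derivative cross_f' k k' t) (at t within S)"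
proof -
  have eq: "cross_f k k' =
      (\<lambda>t. (1 / c_coef k k') * (exp (k' * Phi t - k * Psi t) * (phi'' t - 2*k*Psi' t*phi' t)))"
    by (auto simp: cross_f_def fun_eq_iff)
  show ?thesis
    unfolding eq cross_f'_def by (rule derivative_eq_intros refl | simp)+ (simp add: field_simps)
qed

lemma continuous_on_coefficient_derivs:
  "continuous_on S (f_amp'' k)" "continuous_on S (g_amp'' k k')"
  "continuous_on S (diag_x' k)" "continuous_on S (diag_y' k')"
  "continuous_on S (cross_g' k k')" "continuous_on S (cross_f' k k')"
  unfolding f_amp''_def[abs_def] g_amp''_def[abs_def] diag_x'_def[abs_def] diag_y'_def[abs_def]
    cross_g'_def[abs_def] cross_f'_def[abs_def]
  by (auto simp: divide_inverse intro!: continuous_intros)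

lemma f_amp_ode:
  assumes "k \<noteq> 0"
  shows "f_amp'' k t = diag_x k t * k^2 * f_amp k t + cross_f k k' t * g_amp k k' t"
proof (cases "t \<le> 71/10")
  case True
  with phi_on[OF True] assms show ?thesis
    by (simp add: f_amp''_def diag_x_def f_amp_def cross_f_def power2_eq_square field_simps)
next
  case False
  then have "psi t = 1" using psi_on[of t] by simp
  moreover have "exp (k' * Phi t - k * Psi t) * exp (- k' * Phi t) = exp (- k * Psi t)"
    by (simp add: exp_add[symmetric])
  ultimately show ?thesis using assms
    by (simp add: f_amp''_def diag_x_def f_amp_def cross_f_def g_amp_def power2_eq_square field_simps)
qed

lemma g_amp_ode:
  assumes "k' \<noteq> 0"
  shows "g_amp'' k k' t = diag_y k' t * k'^2 * g_amp k k' t + cross_g k k' t * f_amp k t"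
proof (cases "11/10 \<le> t")
  case True
  with psi_on[OF True] assms show ?thesis
    by (simp add: g_amp''_def diag_y_def g_amp_def cross_g_def power2_eq_square field_simps)
next
  case False
  then have "phi t = 1" using phi_on[of t] by simp
  moreover have "exp (k * Psi t - k' * Phi t) * exp (- k * Psi t) = exp (- k' * Phi t)"
    by (simp add: exp_add[symmetric])
  ultimately show ?thesis using assms
    by (simp add: g_amp''_def diag_y_def g_amp_def cross_g_def f_amp_def power2_eq_square field_simps)
qed

lemma cross_g_weight_le:
  assumes "k < k'" "k' \<le> 2*k" "1/10 < t" "t < 11/10"
  shows "c_coef k k' * exp (k * Psi t - k' * Phi t) \<le> exp (- k/30)"
proof -
  have "c_coef k k' * exp (k * Psi t - k' * Phi t) = exp (- k/2 + 7*k'/30 - (k' * t - k * t))"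
    using Psi_early[of t] Phi_early[of t] assms by (simp add: c_coef_def exp_add[symmetric] algebra_simps)
  also have "\<dots> \<le> exp (- k/30)"
    using mult_right_mono[of k k' t] assms by (subst exp_le_cancel_iff) linarith
  finally show ?thesis .
qed

lemma cross_f_weight_le:
  assumes "k < k'" "k' \<le> 2*k" "71/10 < t" "t < 38/5"
  shows "exp (k' * Phi t - k * Psi t) / c_coef k k' \<le> exp (- k/30)"
proof -
  have "exp (k' * Phi t - k * Psi t) / c_coef k k' = exp ((k' * t - k * t) - 7*k'/30 - 15*k/2)"
    using Psi_late[of t] Phi_early[of t] assms by (simp add: c_coef_def exp_diff[symmetric] algebra_simps)
  also have "\<dots> \<le> exp (- k/30)"
  proof (subst exp_le_cancel_iff)
    have "k' * t - k * t \<le> 38/5 * k' - 38/5 * k"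
      using mult_left_mono[of t "38/5" "k' - k"] assms by (simp add: algebra_simps)
    then show "k' * t - k * t - 7*k'/30 - 15*k/2 \<le> - k/30" using assms by linarith
  qed
  finally show ?thesis .
qed

lemma exp_neg_dominates_quadratic:
  fixes k :: real
  assumes "10^10 \<le> k"
  shows "exp (- k/30) * (10*k^2 + 400*k + 2000) \<le> 1"
proof -
  have "exp (k/30) = exp (k/90) ^ 3" using exp_of_nat_mult[of 3 "k/90"] by simp
  moreover have "k/90 \<le> exp (k/90)" using exp_ge_add_one_self[of "k/90"] by linarith
  then have "(k/90)^3 \<le> exp (k/90) ^ 3" using assms by (intro power_mono) auto
  ultimately have cube: "k^3 / 729000 \<le> exp (k/30)" by (simp add: power_divide)
  have "10*k^2 + 400*k + 2000 \<le> 2410 * k^2"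
    using self_le_power[of k 2] assms by simp
  also have "2410 * k^2 \<le> k^3 / 729000"
  proof -
    have "2410 * 729000 * k^2 \<le> k * k^2" using assms by (intro mult_right_mono) auto
    then show ?thesis by (simp add: power3_eq_cube power2_eq_square field_simps)
  qed
  also note cube
  finally show ?thesis by (simp add: exp_minus field_simps)
qed

lemma abs_mult_small_weight_le_1:
  fixes k a X :: real
  assumes "10^10 \<le> k" "0 \<le> a" "a \<le> exp (-k/30)" "\<bar>X\<bar> \<le> 10*k^2 + 400*k + 2000"
  shows "\<bar>a * X\<bar> \<le> 1"
proof -
  have "\<bar>a * X\<bar> = a * \<bar>X\<bar>" using assms by (simp add: abs_mult)
  also have "\<dots> \<le> exp (-k/30) * (10*k^2 + 400*k + 2000)"
    using assms by (intro mult_mono) auto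
  also have "\<dots> \<le> 1" using exp_neg_dominates_quadratic assms by simp
  finally show ?thesis .
qed

lemma cross_g_bounds:
  assumes k: "10^10 \<le> k" "k < k'" "k' \<le> 2*k"
  shows "\<bar>cross_g k k' t\<bar> \<le> 1 \<and> \<bar>cross_g' k k' t\<bar> \<le> 1"
proof (cases "1/10 < t \<and> t < 11/10")
  case False
  then show ?thesis using psi_off[of t] psi_on[of t] by (auto simp: cross_g_def cross_g'_def)
next
  case True
  define a where "a = c_coef k k' * exp (k * Psi t - k' * Phi t)"
  have a: "0 \<le> a" "a \<le> exp (-k/30)"
    using c_coef_pos[of k k'] cross_g_weight_le[of k k' t] True k by (auto simp: a_def)
  define Y where "Y = psi'' t - 2*k'*psi' t"
  have eqs: "cross_g k k' t = a * Y"
      "cross_g' k k' t = a * ((k - k') * Y + psi''' t - 2*k'*psi'' t)"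
    using Psi_early[of t] Phi_early[of t] True by (simp_all add: cross_g_def cross_g'_def a_def Y_def)
  have p: "0 \<le> psi' t" "psi' t \<le> 35/16" "\<bar>psi'' t\<bar> \<le> 105/4" "\<bar>psi''' t\<bar> \<le> 210"
    using psi_bounds by auto
  have "0 \<le> k' * psi' t" using p k by simp
  moreover have "k' * psi' t \<le> (2*k) * (35/16)" using p k by (intro mult_mono) auto
  ultimately have Y: "\<bar>Y\<bar> \<le> 105/4 + 35/4 * k" using p by (auto simp: Y_def abs_le_iff)
  have "\<bar>(k - k') * Y\<bar> \<le> k * (105/4 + 35/4 * k)"
    unfolding abs_mult using k Y by (intro mult_mono) auto
  also have "\<dots> = 105/4 * k + 35/4 * k^2" by (simp add: algebra_simps power2_eq_square)
  finally have "\<bar>(k - k') * Y\<bar> \<le> 105/4 * k + 35/4 * k^2" .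
  moreover have "\<bar>2*k'*psi'' t\<bar> \<le> 2 * (2*k) * (105/4)"
    unfolding abs_mult using k p by (intro mult_mono) auto
  ultimately have "\<bar>(k - k') * Y + psi''' t - 2*k'*psi'' t\<bar> \<le> 10*k^2 + 400*k + 2000"
    using p k zero_le_power2[of k] by linarith
  moreover have "\<bar>Y\<bar> \<le> 10*k^2 + 400*k + 2000" using Y k zero_le_power2[of k] by linarith
  ultimately show ?thesis unfolding eqs using abs_mult_small_weight_le_1[OF k(1) a] by blast
qed

lemma cross_f_bounds:
  assumes k: "10^10 \<le> k" "k < k'" "k' \<le> 2*k"
  shows "\<bar>cross_f k k' t\<bar> \<le> 1 \<and> \<bar>cross_f' k k' t\<bar> \<le> 1"
proof (cases "71/10 < t \<and> t < 38/5")
  case False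
  then show ?thesis using phi_on[of t] phi_off[of t] by (auto simp: cross_f_def cross_f'_def)
next
  case True
  define a where "a = exp (k' * Phi t - k * Psi t) / c_coef k k'"
  have a: "0 \<le> a" "a \<le> exp (-k/30)"
    using c_coef_pos[of k k'] cross_f_weight_le[of k k' t] True k by (auto simp: a_def)
  define Y where "Y = phi'' t - 2*k*phi' t"
  have eqs: "cross_f k k' t = a * Y"
      "cross_f' k k' t = a * ((k' - k) * Y + phi''' t - 2*k*phi'' t)"
    using Psi_late[of t] Phi_early[of t] True by (simp_all add: cross_f_def cross_f'_def a_def Y_def)
  have p: "\<bar>phi' t\<bar> \<le> 35/8" "\<bar>phi'' t\<bar> \<le> 105" "\<bar>phi''' t\<bar> \<le> 1680"
    using phi_bounds by auto
  have "\<bar>2*k*phi' t\<bar> \<le> (2*k) * (35/8)"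
    unfolding abs_mult using k p by (intro mult_mono) auto
  then have Y: "\<bar>Y\<bar> \<le> 105 + 35/4 * k" using p by (simp add: Y_def; linarith)
  have "\<bar>(k' - k) * Y\<bar> \<le> k * (105 + 35/4 * k)"
    unfolding abs_mult using k Y by (intro mult_mono) auto
  also have "\<dots> = 105 * k + 35/4 * k^2" by (simp add: algebra_simps power2_eq_square)
  finally have "\<bar>(k' - k) * Y\<bar> \<le> 105 * k + 35/4 * k^2" .
  moreover have "\<bar>2*k*phi'' t\<bar> \<le> (2*k) * 105"
    unfolding abs_mult using k p by (intro mult_mono) auto
  ultimately have "\<bar>(k' - k) * Y + phi''' t - 2*k*phi'' t\<bar> \<le> 10*k^2 + 400*k + 2000"
    using p k zero_le_power2[of k] by linarith
  moreover have "\<bar>Y\<bar> \<le> 10*k^2 + 400*k + 2000" using Y k zero_le_power2[of k] by linarith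
  ultimately show ?thesis unfolding eqs using abs_mult_small_weight_le_1[OF k(1) a] by blast
qed

lemma diag_x_bounds:
  assumes "1000 \<le> k"
  shows "99/100 \<le> diag_x k t \<and> diag_x k t \<le> 31/2 \<and> \<bar>diag_x' k t\<bar> \<le> 58"
proof -
  have a: "1 \<le> Psi' t" "Psi' t \<le> 47/12" "\<bar>Psi'' t\<bar> \<le> 35/6" "\<bar>Psi''' t\<bar> \<le> 70/9"
    using Psi_bounds by auto
  have "1 * 1 \<le> Psi' t * Psi' t" "Psi' t * Psi' t \<le> 47/12 * (47/12)"
    using a by (intro mult_mono; simp)+
  moreover have "\<bar>Psi'' t / k\<bar> \<le> 1/100" "\<bar>Psi''' t / k\<bar> \<le> 1"
    using a assms by (simp_all add: abs_divide divide_le_eq)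
  moreover have "\<bar>2 * Psi' t * Psi'' t\<bar> \<le> 2 * (47/12) * (35/6)"
    unfolding abs_mult using a by (intro mult_mono) auto
  ultimately show ?thesis unfolding diag_x_def diag_x'_def power2_eq_square by linarith
qed

lemma diag_y_bounds:
  assumes "1000 \<le> k'"
  shows "1/10 \<le> diag_y k' t \<and> diag_y k' t \<le> 2 \<and> \<bar>diag_y' k' t\<bar> \<le> 58"
proof -
  have a: "11/32 \<le> Phi' t" "Phi' t \<le> 1" "\<bar>Phi'' t\<bar> \<le> 63/16" "\<bar>Phi''' t\<bar> \<le> 63/4"
    using Phi_bounds by auto
  have "11/32 * (11/32) \<le> Phi' t * Phi' t" "Phi' t * Phi' t \<le> 1 * 1"
    using a by (intro mult_mono; simp)+
  moreover have "\<bar>Phi'' t / k'\<bar> \<le> 1/100" "\<bar>Phi''' t / k'\<bar> \<le> 1"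
    using a assms by (simp_all add: abs_divide divide_le_eq)
  moreover have "\<bar>2 * Phi' t * Phi'' t\<bar> \<le> 2 * 1 * (63/16)"
    unfolding abs_mult using a by (intro mult_mono) auto
  ultimately show ?thesis unfolding diag_y_def diag_y'_def power2_eq_square by linarith
qed

lemma abs_mult_weight_le:
  fixes X e :: real
  assumes "\<bar>X\<bar> \<le> B" "0 \<le> e" "e \<le> E" "B \<le> B'"
  shows "\<bar>X * e\<bar> \<le> B' * E"
proof -
  have "\<bar>X * e\<bar> = \<bar>X\<bar> * e" using assms by (simp add: abs_mult)
  also have "\<dots> \<le> B' * E" using assms by (intro mult_mono) auto
  finally show ?thesis .
qed

lemma f_amp_weight_le: "0 \<le> k \<Longrightarrow> exp (- k * Psi t) \<le> exp (- k * t)"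
  using mult_left_mono[OF Psi_bounds(1)[of t], of k] by simp

lemma g_amp_weight_le:
  assumes "0 \<le> k'" "0 \<le> t"
  shows "exp (- k' * Phi t) \<le> exp (- k' * t / 3)"
proof -
  have "k' * t \<le> k' * Phi t" using assms Phi_bounds(1) by (intro mult_left_mono) auto
  moreover have "0 \<le> k' * t" using assms by simp
  ultimately show ?thesis by simp
qed

lemma abs_f_amp_le: "0 \<le> k \<Longrightarrow> \<bar>f_amp k t\<bar> \<le> 200 * exp (- k * t)"
  unfolding f_amp_def using phi_bounds(1) f_amp_weight_le by (intro abs_mult_weight_le[of _ 1]) auto

lemma abs_f_amp'_le:
  assumes "1 \<le> k"
  shows "\<bar>f_amp' k t\<bar> \<le> 200 * k powr (7/3) * exp (- k * t)"
proof -
  have "0 \<le> Psi' t * phi t" using Psi_bounds(2)[of t] phi_bounds(1)[of t] by simp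
  moreover have "Psi' t * phi t \<le> 47/12 * 1"
    using Psi_bounds(2)[of t] phi_bounds(1)[of t] by (intro mult_mono) auto
  ultimately have "0 \<le> k * (Psi' t * phi t)" "k * (Psi' t * phi t) \<le> k * (47/12)"
    using assms by (auto intro: mult_left_mono)
  then have "\<bar>phi' t - k * Psi' t * phi t\<bar> \<le> 35/8 + k * (47/12)"
    using phi_bounds(2)[of t] by (simp add: abs_le_iff mult.assoc; linarith)
  moreover have "35/8 + k * (47/12) \<le> 200 * k powr (7/3)"
    using powr_mono[of 1 "7/3" k] assms by simp
  ultimately show ?thesis
    unfolding f_amp'_def using f_amp_weight_le assms by (intro abs_mult_weight_le) auto
qed

lemma abs_f_amp''_le:
  assumes k: "1 \<le> k"
  shows "\<bar>f_amp'' k t\<bar> \<le> 200 * k powr (14/3) * exp (- k * t)"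
proof -
  have ph: "0 \<le> phi t" "phi t \<le> 1" "\<bar>phi' t\<bar> \<le> 35/8" "\<bar>phi'' t\<bar> \<le> 105" using phi_bounds by auto
  have Ps: "1 \<le> Psi' t" "Psi' t \<le> 47/12" "\<bar>Psi'' t\<bar> \<le> 35/6" using Psi_bounds by auto
  have b1: "\<bar>2 * k * Psi' t * phi' t\<bar> \<le> 2 * k * (47/12) * (35/8)"
    unfolding abs_mult using Ps ph k by (intro mult_mono) auto
  have "k^2 * (Psi' t)^2 \<le> k^2 * (47/12)^2"
    using Ps by (intro mult_left_mono power_mono) auto
  moreover have "\<bar>k * Psi'' t\<bar> \<le> k * (35/6)" using Ps k by (simp add: abs_mult)
  ultimately have "\<bar>k^2 * (Psi' t)^2 - k * Psi'' t\<bar> \<le> k^2 * (47/12)^2 + k * (35/6)"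
    using zero_le_power2[of "k * Psi' t"] unfolding power_mult_distrib by linarith
  then have b2: "\<bar>(k^2 * (Psi' t)^2 - k * Psi'' t) * phi t\<bar> \<le> (k^2 * (47/12)^2 + k * (35/6)) * 1"
    unfolding abs_mult using ph by (intro mult_mono) auto
  have "\<bar>phi'' t - 2*k*Psi' t*phi' t + (k^2 * (Psi' t)^2 - k * Psi'' t) * phi t\<bar>
      \<le> 105 + 2 * k * (47/12) * (35/8) + (k^2 * (47/12)^2 + k * (35/6)) * 1"
    using ph(4) b1 b2 by linarith
  moreover have "105 + 2 * k * (47/12) * (35/8) + (k^2 * (47/12)^2 + k * (35/6)) * 1 \<le> 200 * k powr (14/3)"
  proof -
    have "k \<le> k^2" "1 \<le> k^2" using k self_le_power[of k 2] one_le_power[of k 2] by auto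
    moreover have "k^2 \<le> k powr (14/3)" using powr_mono[of 2 "14/3" k] k by (simp add: powr_realpow)
    ultimately show ?thesis by (simp add: power2_eq_square algebra_simps; linarith)
  qed
  ultimately show ?thesis
    unfolding f_amp''_def using f_amp_weight_le k by (intro abs_mult_weight_le) auto
qed

lemma abs_g_amp_le:
  assumes "0 \<le> k'" "0 \<le> t"
  shows "\<bar>g_amp k k' t\<bar> \<le> 200 * c_coef k k' * exp (- k' * t / 3)"
proof -
  have "\<bar>c_coef k k' * psi t\<bar> \<le> c_coef k k' * 1"
    using c_coef_pos[of k k'] psi_bounds(1)[of t] by (simp add: abs_mult)
  then show ?thesis
    unfolding g_amp_def using c_coef_pos[of k k'] g_amp_weight_le assms
    by (intro abs_mult_weight_le) auto
qed

lemma abs_g_amp'_le: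
  assumes "1 \<le> k'" "0 \<le> t"
  shows "\<bar>g_amp' k k' t\<bar> \<le> 200 * k' * c_coef k k' * exp (- k' * t / 3)"
proof -
  have "0 \<le> Phi' t * psi t" using Phi_bounds(2)[of t] psi_bounds(1)[of t] by simp
  moreover have "Phi' t * psi t \<le> 1" using Phi_bounds(2)[of t] psi_bounds(1)[of t] by (simp add: mult_le_one)
  ultimately have "0 \<le> k' * (Phi' t * psi t)" "k' * (Phi' t * psi t) \<le> k'"
    using assms mult_left_mono[of "Phi' t * psi t" 1 k'] by auto
  then have "\<bar>psi' t - k' * Phi' t * psi t\<bar> \<le> 35/16 + k'"
    using psi_bounds(2)[of t] by (simp add: abs_le_iff mult.assoc; linarith)
  then have "\<bar>c_coef k k' * (psi' t - k' * Phi' t * psi t)\<bar> \<le> c_coef k k' * (35/16 + k')"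
    using c_coef_pos[of k k'] by (simp add: abs_mult)
  moreover have "c_coef k k' * (35/16 + k') \<le> 200 * k' * c_coef k k'"
    using c_coef_pos[of k k'] assms by simp
  ultimately show ?thesis
    unfolding g_amp'_def using g_amp_weight_le assms by (intro abs_mult_weight_le) auto
qed

lemma abs_g_amp''_le:
  assumes k: "1 \<le> k'" "0 \<le> t"
  shows "\<bar>g_amp'' k k' t\<bar> \<le> 200 * k'^2 * c_coef k k' * exp (- k' * t / 3)"
proof -
  have ps: "0 \<le> psi t" "psi t \<le> 1" "0 \<le> psi' t" "psi' t \<le> 35/16" "\<bar>psi'' t\<bar> \<le> 105/4"
    using psi_bounds by auto
  have Ph: "11/32 \<le> Phi' t" "Phi' t \<le> 1" "\<bar>Phi'' t\<bar> \<le> 63/16" using Phi_bounds by auto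
  have b1: "\<bar>2 * k' * Phi' t * psi' t\<bar> \<le> 2 * k' * 1 * (35/16)"
    unfolding abs_mult using Ph ps k by (intro mult_mono) auto
  have "k'^2 * (Phi' t)^2 \<le> k'^2 * 1"
    using Ph by (intro mult_left_mono) (auto simp: power_le_one)
  moreover have "\<bar>k' * Phi'' t\<bar> \<le> k' * (63/16)" using Ph k by (simp add: abs_mult)
  ultimately have "\<bar>k'^2 * (Phi' t)^2 - k' * Phi'' t\<bar> \<le> k'^2 * 1 + k' * (63/16)"
    using zero_le_power2[of "k' * Phi' t"] unfolding power_mult_distrib by linarith
  then have b2: "\<bar>(k'^2 * (Phi' t)^2 - k' * Phi'' t) * psi t\<bar> \<le> (k'^2 * 1 + k' * (63/16)) * 1"
    unfolding abs_mult using ps by (intro mult_mono) auto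
  have "\<bar>psi'' t - 2*k'*Phi' t*psi' t + (k'^2 * (Phi' t)^2 - k' * Phi'' t) * psi t\<bar>
      \<le> 105/4 + 2 * k' * 1 * (35/16) + (k'^2 * 1 + k' * (63/16)) * 1"
    using ps(5) b1 b2 by linarith
  also have "\<dots> \<le> 200 * k'^2"
    using k self_le_power[of k' 2] one_le_power[of k' 2] by simp
  finally have "\<bar>c_coef k k' * (psi'' t - 2*k'*Phi' t*psi' t + (k'^2 * (Phi' t)^2 - k' * Phi'' t) * psi t)\<bar>
      \<le> c_coef k k' * (200 * k'^2)"
    using c_coef_pos[of k k'] by (simp add: abs_mult)
  then show ?thesis
    unfolding g_amp''_def using g_amp_weight_le k by (intro abs_mult_weight_le) (auto simp: ac_simps)
qed

section \<open>Separated fields and the equation\<close>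

text \<open>The solution and every entry of the coefficient field are sums of two separated terms
  a(t) U(x) V(y); this class is closed under the partial derivatives.\<close>
definition sepsum ::
  "(real \<Rightarrow> real) \<Rightarrow> (real \<Rightarrow> real) \<Rightarrow> (real \<Rightarrow> real) \<Rightarrow> (real \<Rightarrow> real) \<Rightarrow> (real \<Rightarrow> real) \<Rightarrow>
   (real \<Rightarrow> real) \<Rightarrow> real \<Rightarrow> real \<Rightarrow> real \<Rightarrow> real" where
  "sepsum a1 U1 V1 a2 U2 V2 = (\<lambda>x y t. a1 t * U1 x * V1 y + a2 t * U2 x * V2 y)"

definition has_cont_deriv :: "(real \<Rightarrow> real) \<Rightarrow> (real \<Rightarrow> real) \<Rightarrow> bool" where
  "has_cont_deriv f f' \<longleftrightarrow> (\<forall>t. (f has_real_derivative f' t) (at t)) \<and> continuous_on UNIV f'"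

lemma has_cont_deriv_imp_continuous: "has_cont_deriv f f' \<Longrightarrow> continuous_on UNIV f"
  unfolding has_cont_deriv_def by (meson DERIV_continuous_on)

lemma continuous_on_compose_UNIV:
  "continuous_on UNIV f \<Longrightarrow> continuous_on S h \<Longrightarrow> continuous_on S (\<lambda>x. f (h x))"
  by (rule continuous_on_compose2[where t=UNIV]) auto

lemma cont3_sepsum:
  assumes "continuous_on UNIV a1" "continuous_on UNIV U1" "continuous_on UNIV V1"
    "continuous_on UNIV a2" "continuous_on UNIV U2" "continuous_on UNIV V2"
  shows "cont3 (sepsum a1 U1 V1 a2 U2 V2)"
  unfolding sepsum_def cont3_def
  by (intro continuous_on_add continuous_on_mult continuous_intros
      continuous_on_compose_UNIV[OF assms(1)] continuous_on_compose_UNIV[OF assms(2)]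
      continuous_on_compose_UNIV[OF assms(3)] continuous_on_compose_UNIV[OF assms(4)]
      continuous_on_compose_UNIV[OF assms(5)] continuous_on_compose_UNIV[OF assms(6)])

lemma sepsum_has_derivative_x:
  assumes "has_cont_deriv U1 U1'" "has_cont_deriv U2 U2'"
  shows "((\<lambda>s. sepsum a1 U1 V1 a2 U2 V2 s y t) has_real_derivative sepsum a1 U1' V1 a2 U2' V2 x y t) (at x)"
  using assms unfolding has_cont_deriv_def sepsum_def
  by (intro DERIV_add DERIV_cmult_right DERIV_cmult) auto

lemma sepsum_has_derivative_y:
  assumes "has_cont_deriv V1 V1'" "has_cont_deriv V2 V2'"
  shows "((\<lambda>s. sepsum a1 U1 V1 a2 U2 V2 x s t) has_real_derivative sepsum a1 U1 V1' a2 U2 V2' x y t) (at y)"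
  using assms unfolding has_cont_deriv_def sepsum_def
  by (intro DERIV_add DERIV_cmult) auto

lemma sepsum_has_derivative_t:
  assumes "has_cont_deriv a1 a1'" "has_cont_deriv a2 a2'"
  shows "((\<lambda>s. sepsum a1 U1 V1 a2 U2 V2 x y s) has_real_derivative sepsum a1' U1 V1 a2' U2 V2 x y t) (at t)"
  using assms unfolding has_cont_deriv_def sepsum_def
  by (intro DERIV_add DERIV_cmult_right) auto

lemma part_sepsum:
  assumes "has_cont_deriv a1 a1'" "has_cont_deriv a2 a2'" "has_cont_deriv U1 U1'"
    "has_cont_deriv U2 U2'" "has_cont_deriv V1 V1'" "has_cont_deriv V2 V2'"
  shows "part 0 (sepsum a1 U1 V1 a2 U2 V2) = sepsum a1 U1' V1 a2 U2' V2"
    "part 1 (sepsum a1 U1 V1 a2 U2 V2) = sepsum a1 U1 V1' a2 U2 V2'"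
    "part 2 (sepsum a1 U1 V1 a2 U2 V2) = sepsum a1' U1 V1 a2' U2 V2"
  unfolding part_def
  by (simp_all add: fun_eq_iff DERIV_imp_deriv[OF sepsum_has_derivative_x[OF assms(3,4)]]
     DERIV_imp_deriv[OF sepsum_has_derivative_y[OF assms(5,6)]]
     DERIV_imp_deriv[OF sepsum_has_derivative_t[OF assms(1,2)]])

lemma C1_fun_sepsum:
  assumes "has_cont_deriv a1 a1'" "has_cont_deriv a2 a2'" "has_cont_deriv U1 U1'"
    "has_cont_deriv U2 U2'" "has_cont_deriv V1 V1'" "has_cont_deriv V2 V2'"
  shows "C1_fun (sepsum a1 U1 V1 a2 U2 V2)"
proof -
  have c: "continuous_on UNIV a1" "continuous_on UNIV U1" "continuous_on UNIV V1"
    "continuous_on UNIV a2" "continuous_on UNIV U2" "continuous_on UNIV V2"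
    using assms by (auto intro: has_cont_deriv_imp_continuous)
  have c': "continuous_on UNIV a1'" "continuous_on UNIV a2'" "continuous_on UNIV U1'"
    "continuous_on UNIV U2'" "continuous_on UNIV V1'" "continuous_on UNIV V2'"
    using assms by (auto simp: has_cont_deriv_def)
  have "has_partials (sepsum a1 U1 V1 a2 U2 V2)"
    unfolding has_partials_def
    using sepsum_has_derivative_x[OF assms(3,4)] sepsum_has_derivative_y[OF assms(5,6)]
      sepsum_has_derivative_t[OF assms(1,2)]
    by (meson real_differentiable_def)
  moreover have "cont3 (part i (sepsum a1 U1 V1 a2 U2 V2))" if "i < 3" for i
  proof -
    have "i = 0 \<or> i = 1 \<or> i = 2" using that by auto
    then show ?thesis using part_sepsum[OF assms] c c' by (auto intro!: cont3_sepsum)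
  qed
  ultimately show ?thesis unfolding C1_fun_def using cont3_sepsum[OF c] by auto
qed

lemma part_mult_xy:
  assumes "\<And>x y t. ((\<lambda>s. F s y t) has_real_derivative F0 x y t) (at x)"
    "\<And>x y t. ((\<lambda>s. G s y t) has_real_derivative G0 x y t) (at x)"
    "\<And>x y t. ((\<lambda>s. F x s t) has_real_derivative F1 x y t) (at y)"
    "\<And>x y t. ((\<lambda>s. G x s t) has_real_derivative G1 x y t) (at y)"
  shows "part 0 (\<lambda>x y t. F x y t * G x y t) x y t = F0 x y t * G x y t + F x y t * G0 x y t"
    "part 1 (\<lambda>x y t. F x y t * G x y t) x y t = F1 x y t * G x y t + F x y t * G1 x y t"
  unfolding part_def
  by (simp_all add: DERIV_imp_deriv[OF DERIV_mult[OF assms(1,2)]] DERIV_imp_deriv[OF DERIV_mult[OF assms(3,4)]])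

lemma has_cont_deriv_const: "has_cont_deriv (\<lambda>_. c) (\<lambda>_. 0)"
  by (simp add: has_cont_deriv_def)

lemma has_cont_deriv_trig:
  "has_cont_deriv (\<lambda>x. cos (k * x)) (\<lambda>x. - k * sin (k * x))"
  "has_cont_deriv (\<lambda>x. sin (k * x)) (\<lambda>x. k * cos (k * x))"
  "has_cont_deriv (\<lambda>x. - k * sin (k * x)) (\<lambda>x. - k * (k * cos (k * x)))"
  "has_cont_deriv (\<lambda>x. k * cos (k * x)) (\<lambda>x. - k * (k * sin (k * x)))"
  "has_cont_deriv (\<lambda>x. - k * (k * cos (k * x))) (\<lambda>x. k * (k * (k * sin (k * x))))"
  unfolding has_cont_deriv_def by (auto intro!: derivative_eq_intros continuous_intros)

definition u_sol :: "real \<Rightarrow> real \<Rightarrow> real \<Rightarrow> real \<Rightarrow> real \<Rightarrow> real" where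
  "u_sol k k' = sepsum (f_amp k) (\<lambda>x. cos (k*x)) (\<lambda>_. 1) (g_amp k k') (\<lambda>_. 1) (\<lambda>y. cos (k'*y))"

text \<open>The off-diagonal entries turn the cos(2kx) and cos(2k'y) produced by the perturbations of the
  diagonal entries back into the pure modes, by sin^2 + cos^2 = 1.\<close>
definition A_sol :: "real \<Rightarrow> real \<Rightarrow> nat \<Rightarrow> nat \<Rightarrow> real \<Rightarrow> real \<Rightarrow> real \<Rightarrow> real" where
  "A_sol k k' i j = (if i = 0 then
     (if j = 0 then sepsum (diag_x k) (\<lambda>_. 1) (\<lambda>_. 1) (\<lambda>t. cross_g k k' t / k^2) (\<lambda>x. cos (k*x)) (\<lambda>y. cos (k'*y))
      else sepsum (\<lambda>_. 0) (\<lambda>_. 1) (\<lambda>_. 1) (\<lambda>t. 2 * cross_f k k' t / (k*k')) (\<lambda>x. sin (k*x)) (\<lambda>y. sin (k'*y)))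
   else
     (if j = 0 then sepsum (\<lambda>_. 0) (\<lambda>_. 1) (\<lambda>_. 1) (\<lambda>t. 2 * cross_g k k' t / (k*k')) (\<lambda>x. sin (k*x)) (\<lambda>y. sin (k'*y))
      else sepsum (diag_y k') (\<lambda>_. 1) (\<lambda>_. 1) (\<lambda>t. cross_f k k' t / k'^2) (\<lambda>x. cos (k*x)) (\<lambda>y. cos (k'*y))))"

lemma A_sol_entries:
  "A_sol k k' 0 0 = sepsum (diag_x k) (\<lambda>_. 1) (\<lambda>_. 1) (\<lambda>t. cross_g k k' t / k^2) (\<lambda>x. cos (k*x)) (\<lambda>y. cos (k'*y))"
  "A_sol k k' 0 1 = sepsum (\<lambda>_. 0) (\<lambda>_. 1) (\<lambda>_. 1) (\<lambda>t. 2 * cross_f k k' t / (k*k')) (\<lambda>x. sin (k*x)) (\<lambda>y. sin (k'*y))"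
  "A_sol k k' 1 0 = sepsum (\<lambda>_. 0) (\<lambda>_. 1) (\<lambda>_. 1) (\<lambda>t. 2 * cross_g k k' t / (k*k')) (\<lambda>x. sin (k*x)) (\<lambda>y. sin (k'*y))"
  "A_sol k k' 1 1 = sepsum (diag_y k') (\<lambda>_. 1) (\<lambda>_. 1) (\<lambda>t. cross_f k k' t / k'^2) (\<lambda>x. cos (k*x)) (\<lambda>y. cos (k'*y))"
  by (simp_all add: A_sol_def)

lemma has_cont_deriv_coefficients:
  "has_cont_deriv (f_amp k) (f_amp' k)" "has_cont_deriv (f_amp' k) (f_amp'' k)"
  "has_cont_deriv (g_amp k k') (g_amp' k k')" "has_cont_deriv (g_amp' k k') (g_amp'' k k')"
  "has_cont_deriv (diag_x k) (diag_x' k)" "has_cont_deriv (diag_y k') (diag_y' k')"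
  "has_cont_deriv (\<lambda>t. cross_g k k' t / a) (\<lambda>t. cross_g' k k' t / a)"
  "has_cont_deriv (\<lambda>t. cross_f k k' t / a) (\<lambda>t. cross_f' k k' t / a)"
  "has_cont_deriv (\<lambda>t. 2 * cross_g k k' t / a) (\<lambda>t. 2 * cross_g' k k' t / a)"
  "has_cont_deriv (\<lambda>t. 2 * cross_f k k' t / a) (\<lambda>t. 2 * cross_f' k k' t / a)"
  unfolding has_cont_deriv_def
  using continuous_on_coefficient_derivs f_amp_has_derivative f_amp'_has_derivative
    g_amp_has_derivative g_amp'_has_derivative diag_has_derivative
    DERIV_continuous_on[OF f_amp'_has_derivative] DERIV_continuous_on[OF g_amp'_has_derivative]
  by (auto simp: divide_inverse intro!: derivative_eq_intros continuous_intros
      cross_g_has_derivative cross_f_has_derivative)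

lemmas has_cont_deriv_intros = has_cont_deriv_trig has_cont_deriv_const has_cont_deriv_coefficients

lemma part_u_sol:
  "part 0 (u_sol k k') = sepsum (f_amp k) (\<lambda>x. - k * sin (k*x)) (\<lambda>_. 1) (g_amp k k') (\<lambda>_. 0) (\<lambda>y. cos (k'*y))"
  "part 1 (u_sol k k') = sepsum (f_amp k) (\<lambda>x. cos (k*x)) (\<lambda>_. 0) (g_amp k k') (\<lambda>_. 1) (\<lambda>y. - k' * sin (k'*y))"
  "part 2 (u_sol k k') = sepsum (f_amp' k) (\<lambda>x. cos (k*x)) (\<lambda>_. 1) (g_amp' k k') (\<lambda>_. 1) (\<lambda>y. cos (k'*y))"
  unfolding u_sol_def by (rule part_sepsum; rule has_cont_deriv_intros)+

lemma part_part_u_sol: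
  "part 2 (part 2 (u_sol k k')) = sepsum (f_amp'' k) (\<lambda>x. cos (k*x)) (\<lambda>_. 1) (g_amp'' k k') (\<lambda>_. 1) (\<lambda>y. cos (k'*y))"
  unfolding part_u_sol by (rule part_sepsum; rule has_cont_deriv_intros)+

lemma C2_fun_u_sol: "C2_fun (u_sol k k')"
proof -
  have "C1_fun (u_sol k k')" unfolding u_sol_def by (rule C1_fun_sepsum; rule has_cont_deriv_intros)
  moreover have "C1_fun (part 0 (u_sol k k'))" "C1_fun (part 1 (u_sol k k'))" "C1_fun (part 2 (u_sol k k'))"
    unfolding part_u_sol by (rule C1_fun_sepsum; rule has_cont_deriv_intros)+
  moreover have "i < 3 \<Longrightarrow> i = 0 \<or> i = 1 \<or> i = 2" for i :: nat by auto
  ultimately show ?thesis unfolding C2_fun_def by auto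
qed

lemma C1_fun_A_sol: "C1_fun (A_sol k k' i j)"
  unfolding A_sol_def by (auto intro!: C1_fun_sepsum intro: has_cont_deriv_intros)

lemma u_sol_pde:
  assumes k: "k \<noteq> 0" "k' \<noteq> 0"
  shows "part 2 (part 2 (u_sol k k')) x y t + div_form (A_sol k k') (u_sol k k') x y t = 0"
proof -
  have d: "div_form (A_sol k k') (u_sol k k') x y t =
      part 0 (\<lambda>x y t. A_sol k k' 0 0 x y t * part 0 (u_sol k k') x y t) x y t
    + part 0 (\<lambda>x y t. A_sol k k' 0 1 x y t * part 1 (u_sol k k') x y t) x y t
    + part 1 (\<lambda>x y t. A_sol k k' 1 0 x y t * part 0 (u_sol k k') x y t) x y t
    + part 1 (\<lambda>x y t. A_sol k k' 1 1 x y t * part 1 (u_sol k k') x y t) x y t"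
    unfolding div_form_def by (simp add: numeral_2_eq_2)
  note dx = sepsum_has_derivative_x and dy = sepsum_has_derivative_y
  note trig = has_cont_deriv_trig and const = has_cont_deriv_const
  note t1 = part_mult_xy(1)[OF dx[OF const trig(1)[of k]] dx[OF trig(3)[of k] const]
       dy[OF const trig(1)[of k']] dy[OF const trig(1)[of k']]]
  note t2 = part_mult_xy(1)[OF dx[OF const trig(2)[of k]] dx[OF trig(1)[of k] const]
       dy[OF const trig(2)[of k']] dy[OF const trig(3)[of k']]]
  note t3 = part_mult_xy(2)[OF dx[OF const trig(2)[of k]] dx[OF trig(3)[of k] const]
       dy[OF const trig(2)[of k']] dy[OF const trig(1)[of k']]]
  note t4 = part_mult_xy(2)[OF dx[OF const trig(1)[of k]] dx[OF trig(1)[of k] const]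
       dy[OF const trig(1)[of k']] dy[OF const trig(3)[of k']]]
  have "part 2 (part 2 (u_sol k k')) x y t + div_form (A_sol k k') (u_sol k k') x y t =
     (f_amp'' k t - diag_x k t * k^2 * f_amp k t - cross_f k k' t * g_amp k k' t) * cos (k*x)
   + (g_amp'' k k' t - diag_y k' t * k'^2 * g_amp k k' t - cross_g k k' t * f_amp k t) * cos (k'*y)"
    unfolding d part_part_u_sol unfolding A_sol_entries part_u_sol t1 t2 t3 t4
    using k by (simp add: sepsum_def field_simps)
      (use sin_cos_squared_add[of "k*x"] sin_cos_squared_add[of "k'*y"] in algebra)
  then show ?thesis using f_amp_ode[OF k(1), of t k'] g_amp_ode[OF k(2), of k t] by simp
qed

lemma part_A_sol_sepsum:
  "part 0 (A_sol k k' 0 0) = sepsum (diag_x k) (\<lambda>_. 0) (\<lambda>_. 1) (\<lambda>t. cross_g k k' t / k^2) (\<lambda>x. - k * sin (k*x)) (\<lambda>y. cos (k'*y))"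
  "part 1 (A_sol k k' 0 0) = sepsum (diag_x k) (\<lambda>_. 1) (\<lambda>_. 0) (\<lambda>t. cross_g k k' t / k^2) (\<lambda>x. cos (k*x)) (\<lambda>y. - k' * sin (k'*y))"
  "part 2 (A_sol k k' 0 0) = sepsum (diag_x' k) (\<lambda>_. 1) (\<lambda>_. 1) (\<lambda>t. cross_g' k k' t / k^2) (\<lambda>x. cos (k*x)) (\<lambda>y. cos (k'*y))"
  "part 0 (A_sol k k' 0 1) = sepsum (\<lambda>_. 0) (\<lambda>_. 0) (\<lambda>_. 1) (\<lambda>t. 2 * cross_f k k' t / (k*k')) (\<lambda>x. k * cos (k*x)) (\<lambda>y. sin (k'*y))"
  "part 1 (A_sol k k' 0 1) = sepsum (\<lambda>_. 0) (\<lambda>_. 1) (\<lambda>_. 0) (\<lambda>t. 2 * cross_f k k' t / (k*k')) (\<lambda>x. sin (k*x)) (\<lambda>y. k' * cos (k'*y))"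
  "part 2 (A_sol k k' 0 1) = sepsum (\<lambda>_. 0) (\<lambda>_. 1) (\<lambda>_. 1) (\<lambda>t. 2 * cross_f' k k' t / (k*k')) (\<lambda>x. sin (k*x)) (\<lambda>y. sin (k'*y))"
  "part 0 (A_sol k k' 1 0) = sepsum (\<lambda>_. 0) (\<lambda>_. 0) (\<lambda>_. 1) (\<lambda>t. 2 * cross_g k k' t / (k*k')) (\<lambda>x. k * cos (k*x)) (\<lambda>y. sin (k'*y))"
  "part 1 (A_sol k k' 1 0) = sepsum (\<lambda>_. 0) (\<lambda>_. 1) (\<lambda>_. 0) (\<lambda>t. 2 * cross_g k k' t / (k*k')) (\<lambda>x. sin (k*x)) (\<lambda>y. k' * cos (k'*y))"
  "part 2 (A_sol k k' 1 0) = sepsum (\<lambda>_. 0) (\<lambda>_. 1) (\<lambda>_. 1) (\<lambda>t. 2 * cross_g' k k' t / (k*k')) (\<lambda>x. sin (k*x)) (\<lambda>y. sin (k'*y))"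
  "part 0 (A_sol k k' 1 1) = sepsum (diag_y k') (\<lambda>_. 0) (\<lambda>_. 1) (\<lambda>t. cross_f k k' t / k'^2) (\<lambda>x. - k * sin (k*x)) (\<lambda>y. cos (k'*y))"
  "part 1 (A_sol k k' 1 1) = sepsum (diag_y k') (\<lambda>_. 1) (\<lambda>_. 0) (\<lambda>t. cross_f k k' t / k'^2) (\<lambda>x. cos (k*x)) (\<lambda>y. - k' * sin (k'*y))"
  "part 2 (A_sol k k' 1 1) = sepsum (diag_y' k') (\<lambda>_. 1) (\<lambda>_. 1) (\<lambda>t. cross_f' k k' t / k'^2) (\<lambda>x. cos (k*x)) (\<lambda>y. cos (k'*y))"
  unfolding A_sol_entries by (rule part_sepsum; rule has_cont_deriv_intros)+

lemma part_A_sol_eqs: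
  assumes "k \<noteq> 0" "k' \<noteq> 0"
  shows
    "part 0 (A_sol k k' 0 0) x y t = cross_g k k' t * sin (k*x) * cos (k'*y) * (-1/k)"
    "part 1 (A_sol k k' 0 0) x y t = cross_g k k' t * cos (k*x) * sin (k'*y) * (-k'/k^2)"
    "part 2 (A_sol k k' 0 0) x y t = diag_x' k t + cross_g' k k' t * cos (k*x) * cos (k'*y) * (1/k^2)"
    "part 0 (A_sol k k' 0 1) x y t = cross_f k k' t * cos (k*x) * sin (k'*y) * (2/k')"
    "part 1 (A_sol k k' 0 1) x y t = cross_f k k' t * sin (k*x) * cos (k'*y) * (2/k)"
    "part 2 (A_sol k k' 0 1) x y t = cross_f' k k' t * sin (k*x) * sin (k'*y) * (2/(k*k'))"
    "part 0 (A_sol k k' 1 0) x y t = cross_g k k' t * cos (k*x) * sin (k'*y) * (2/k')"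
    "part 1 (A_sol k k' 1 0) x y t = cross_g k k' t * sin (k*x) * cos (k'*y) * (2/k)"
    "part 2 (A_sol k k' 1 0) x y t = cross_g' k k' t * sin (k*x) * sin (k'*y) * (2/(k*k'))"
    "part 0 (A_sol k k' 1 1) x y t = cross_f k k' t * sin (k*x) * cos (k'*y) * (-k/k'^2)"
    "part 1 (A_sol k k' 1 1) x y t = cross_f k k' t * cos (k*x) * sin (k'*y) * (-1/k')"
    "part 2 (A_sol k k' 1 1) x y t = diag_y' k' t + cross_f' k k' t * cos (k*x) * cos (k'*y) * (1/k'^2)"
  using assms unfolding part_A_sol_sepsum by (simp_all add: sepsum_def field_simps power2_eq_square)

lemma abs_unit_factors_le:
  fixes r s c m :: real
  assumes "\<bar>r\<bar> \<le> 1" "\<bar>s\<bar> \<le> 1" "\<bar>c\<bar> \<le> 1"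
  shows "\<bar>r * s * c * m\<bar> \<le> \<bar>m\<bar>"
proof -
  have "\<bar>r\<bar> * \<bar>s\<bar> * \<bar>c\<bar> \<le> 1" using assms by (intro mult_le_one) auto
  then show ?thesis by (simp add: abs_mult mult_left_le_one_le)
qed

lemma abs_part_A_sol_le:
  assumes k: "10^10 \<le> k" "k < k'" "k' \<le> 2*k" and ijl: "i < 2" "j < 2" "l < 3"
  shows "\<bar>part l (A_sol k k' i j) x y t\<bar> \<le> 60"
proof -
  have R: "\<bar>cross_g k k' t\<bar> \<le> 1" "\<bar>cross_g' k k' t\<bar> \<le> 1" "\<bar>cross_f k k' t\<bar> \<le> 1" "\<bar>cross_f' k k' t\<bar> \<le> 1"
    using cross_g_bounds[OF k] cross_f_bounds[OF k] by auto
  have D: "\<bar>diag_x' k t\<bar> \<le> 58" "\<bar>diag_y' k' t\<bar> \<le> 58"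
    using diag_x_bounds[of k t] diag_y_bounds[of k' t] k by auto
  have k2: "2 \<le> k" using k by simp
  have kk: "2 * k \<le> k * k" "1 * k' \<le> k * k'" "k * 1 \<le> k' * k'" using k by (intro mult_mono; simp)+
  have "k' \<le> k*k" "1 \<le> k*k" "2 \<le> k*k'" "k \<le> k'*k'" "1 \<le> k'*k'"
    using k k2 kk by linarith+
  then have m: "\<bar>-1/k\<bar> \<le> 1" "\<bar>-k'/k^2\<bar> \<le> 1" "\<bar>1/k^2\<bar> \<le> 1" "\<bar>2/k'\<bar> \<le> 1" "\<bar>2/k\<bar> \<le> 1"
     "\<bar>2/(k*k')\<bar> \<le> 1" "\<bar>-k/k'^2\<bar> \<le> 1" "\<bar>-1/k'\<bar> \<le> 1" "\<bar>1/k'^2\<bar> \<le> 1"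
    using k k2 by (simp_all add: power2_eq_square abs_divide abs_mult)
  have pure: "\<bar>r * s * c * m\<bar> \<le> 60" if "\<bar>r\<bar> \<le> 1" "\<bar>s\<bar> \<le> 1" "\<bar>c\<bar> \<le> 1" "\<bar>m\<bar> \<le> 1"
    for r s c m :: real
    using abs_unit_factors_le[OF that(1-3), of m] that(4) by linarith
  have perturbed: "\<bar>p + r * s * c * m\<bar> \<le> 60"
    if "\<bar>p\<bar> \<le> 58" "\<bar>r\<bar> \<le> 1" "\<bar>s\<bar> \<le> 1" "\<bar>c\<bar> \<le> 1" "\<bar>m\<bar> \<le> 1" for p r s c m :: real
    using abs_unit_factors_le[OF that(2-4), of m] that(1,5) by linarith
  have kne: "k \<noteq> 0" "k' \<noteq> 0" using k by auto
  have "i = 0 \<or> i = 1" "j = 0 \<or> j = 1" "l = 0 \<or> l = 1 \<or> l = 2" using ijl by auto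
  then show ?thesis
    by (elim disjE) (simp_all only: part_A_sol_eqs[OF kne],
        (rule pure perturbed; rule R D m abs_sin_le_one abs_cos_le_one)+)
qed

lemma quadratic_form_bounds:
  fixes a b1 b2 d x y :: real
  assumes "9/10 \<le> a" "a \<le> 16" "\<bar>b1\<bar> \<le> 1/200" "\<bar>b2\<bar> \<le> 1/200" "1/20 \<le> d" "d \<le> 3"
  shows "1/80 * (x^2 + y^2) \<le> x*a*x + x*b1*y + y*b2*x + y*d*y \<and>
    x*a*x + x*b1*y + y*b2*x + y*d*y \<le> 80 * (x^2 + y^2)"
proof -
  have eq: "x*a*x + x*b1*y + y*b2*x + y*d*y = a * x^2 + (b1 + b2) * (x*y) + d * y^2"
    by (simp add: power2_eq_square algebra_simps)
  have xy: "2 * \<bar>x*y\<bar> \<le> x^2 + y^2"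
    using zero_le_power2[of "\<bar>x\<bar> - \<bar>y\<bar>"] by (simp add: power2_eq_square algebra_simps abs_mult)
  have "\<bar>b1 + b2\<bar> \<le> 1/100" using assms by linarith
  then have "\<bar>(b1 + b2) * (x*y)\<bar> \<le> 1/100 * \<bar>x*y\<bar>"
    unfolding abs_mult[of "b1 + b2"] by (intro mult_right_mono) auto
  also have "\<dots> \<le> x^2/200 + y^2/200" using xy by simp
  finally have "\<bar>(b1 + b2) * (x*y)\<bar> \<le> x^2/200 + y^2/200" .
  moreover note mult_right_mono[OF assms(1) zero_le_power2[of x]] mult_right_mono[OF assms(2) zero_le_power2[of x]]
    mult_right_mono[OF assms(5) zero_le_power2[of y]] mult_right_mono[OF assms(6) zero_le_power2[of y]]
  ultimately have "x^2/80 + y^2/80 \<le> a * x^2 + (b1 + b2) * (x*y) + d * y^2 \<and>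
    a * x^2 + (b1 + b2) * (x*y) + d * y^2 \<le> 80 * x^2 + 80 * y^2"
    using zero_le_power2[of x] zero_le_power2[of y] by linarith
  then show ?thesis unfolding eq by (simp add: distrib_left)
qed

lemma regclass_A_sol:
  assumes k: "10^10 \<le> k" "k < k'" "k' \<le> 2*k"
  shows "regclass 80 60 (A_sol k k')"
proof -
  have R: "\<bar>cross_g k k' t\<bar> \<le> 1" "\<bar>cross_f k k' t\<bar> \<le> 1" for t
    using cross_g_bounds[OF k] cross_f_bounds[OF k] by auto
  have "100 * 100 \<le> k * k" "100 * 100 \<le> k' * k'" "20 * 20 \<le> k * k'" using k by (intro mult_mono; simp)+
  then have m: "\<bar>1/k^2\<bar> \<le> 1/100" "\<bar>1/k'^2\<bar> \<le> 1/100" "\<bar>2/(k*k')\<bar> \<le> 1/200"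
    using k by (simp_all add: power2_eq_square abs_divide abs_mult divide_le_eq)
  have "1/80 * ((\<xi> 0)\<^sup>2 + (\<xi> 1)\<^sup>2) \<le> (\<Sum>i<2. \<Sum>j<2. \<xi> i * A_sol k k' i j x y t * \<xi> j) \<and>
        (\<Sum>i<2. \<Sum>j<2. \<xi> i * A_sol k k' i j x y t * \<xi> j) \<le> 80 * ((\<xi> 0)\<^sup>2 + (\<xi> 1)\<^sup>2)"
    for x y t and \<xi> :: "nat \<Rightarrow> real"
  proof -
    have "A_sol k k' 0 0 x y t = diag_x k t + cross_g k k' t * cos (k*x) * cos (k'*y) * (1/k^2)"
      "A_sol k k' 0 1 x y t = cross_f k k' t * sin (k*x) * sin (k'*y) * (2/(k*k'))"
      "A_sol k k' 1 0 x y t = cross_g k k' t * sin (k*x) * sin (k'*y) * (2/(k*k'))"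
      "A_sol k k' 1 1 x y t = diag_y k' t + cross_f k k' t * cos (k*x) * cos (k'*y) * (1/k'^2)"
      unfolding A_sol_entries sepsum_def by simp_all
    moreover have "\<bar>cross_g k k' t * cos (k*x) * cos (k'*y) * (1/k^2)\<bar> \<le> 1/100"
      by (rule order_trans[OF abs_unit_factors_le m(1)]) (use R in auto)
    moreover have "\<bar>cross_f k k' t * sin (k*x) * sin (k'*y) * (2/(k*k'))\<bar> \<le> 1/200"
      by (rule order_trans[OF abs_unit_factors_le m(3)]) (use R in auto)
    moreover have "\<bar>cross_g k k' t * sin (k*x) * sin (k'*y) * (2/(k*k'))\<bar> \<le> 1/200"
      by (rule order_trans[OF abs_unit_factors_le m(3)]) (use R in auto)
    moreover have "\<bar>cross_f k k' t * cos (k*x) * cos (k'*y) * (1/k'^2)\<bar> \<le> 1/100"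
      by (rule order_trans[OF abs_unit_factors_le m(2)]) (use R in auto)
    moreover have "99/100 \<le> diag_x k t \<and> diag_x k t \<le> 31/2" "1/10 \<le> diag_y k' t \<and> diag_y k' t \<le> 2"
      using diag_x_bounds[of k t] diag_y_bounds[of k' t] k by auto
    ultimately have "9/10 \<le> A_sol k k' 0 0 x y t \<and> A_sol k k' 0 0 x y t \<le> 16 \<and>
      \<bar>A_sol k k' 0 1 x y t\<bar> \<le> 1/200 \<and> \<bar>A_sol k k' 1 0 x y t\<bar> \<le> 1/200 \<and>
      1/20 \<le> A_sol k k' 1 1 x y t \<and> A_sol k k' 1 1 x y t \<le> 3"
      by linarith
    moreover have "(\<Sum>i<2. \<Sum>j<2. \<xi> i * A_sol k k' i j x y t * \<xi> j) =
      \<xi> 0 * A_sol k k' 0 0 x y t * \<xi> 0 + \<xi> 0 * A_sol k k' 0 1 x y t * \<xi> 1 +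
      \<xi> 1 * A_sol k k' 1 0 x y t * \<xi> 0 + \<xi> 1 * A_sol k k' 1 1 x y t * \<xi> 1"
      by (simp add: numeral_2_eq_2)
    ultimately show ?thesis using quadratic_form_bounds by presburger
  qed
  then show ?thesis unfolding regclass_def using C1_fun_A_sol abs_part_A_sol_le[OF k] by auto
qed

lemma u_sol_initial: "t \<le> 1/100 \<Longrightarrow> u_sol k k' x y t = cos (k*x) * exp (- k * t)"
  using phi_on[of t] Psi_early[of t] psi_off[of t] by (simp add: u_sol_def sepsum_def f_amp_def g_amp_def)

lemma u_sol_final: "999/100 \<le> t \<Longrightarrow> u_sol k k' x y t = c_coef k k' * cos (k'*y) * exp (- k' * t)"
  using phi_off[of t] Phi_late[of t] psi_on[of t] by (simp add: u_sol_def sepsum_def f_amp_def g_amp_def)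

lemma A_sol_eq_id:
  assumes "t \<le> 1/100 \<or> 999/100 \<le> t" "i < 2" "j < 2"
  shows "A_sol k k' i j x y t = idmat i j"
proof -
  have "cross_g k k' t = 0" using assms(1) psi_off[of t] psi_on[of t] by (auto simp: cross_g_def)
  moreover have "cross_f k k' t = 0" using assms(1) phi_on[of t] phi_off[of t] by (auto simp: cross_f_def)
  moreover have "diag_x k t = 1" using assms(1) Psi_early[of t] Psi_late[of t] by (auto simp: diag_x_def)
  moreover have "diag_y k' t = 1" using assms(1) Phi_early[of t] Phi_late[of t] by (auto simp: diag_y_def)
  moreover have "i = 0 \<or> i = 1" "j = 0 \<or> j = 1" using assms by auto
  ultimately show ?thesis by (auto simp: A_sol_def sepsum_def idmat_def)
qed

lemma trig_int_mult_add_2pi: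
  "cos (real_of_int a * (x + 2*pi)) = cos (real_of_int a * x)"
  "sin (real_of_int a * (x + 2*pi)) = sin (real_of_int a * x)"
proof -
  have "real_of_int a * (x + 2*pi) = real_of_int a * x + (2*pi) * real_of_int a" by (simp add: algebra_simps)
  then show "cos (real_of_int a * (x + 2*pi)) = cos (real_of_int a * x)"
    "sin (real_of_int a * (x + 2*pi)) = sin (real_of_int a * x)"
    by (simp_all add: cos_add sin_add)
qed

lemma periodic2_u_sol: "periodic2 (u_sol (real_of_int a) (real_of_int b))"
  unfolding periodic2_def u_sol_def sepsum_def by (simp add: trig_int_mult_add_2pi)

lemma periodic2_A_sol: "periodic2 (A_sol (real_of_int a) (real_of_int b) i j)"
  unfolding periodic2_def A_sol_def sepsum_def by (simp add: trig_int_mult_add_2pi)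

lemma u_sol_transforms:
  fixes k k' :: int
  assumes "k \<noteq> 0" "k' \<noteq> 0"
  shows "transforms (\<lambda>x y t. cos (k * x) * exp (- real_of_int k * t))
    (\<lambda>x y t. c_coef k k' * cos (k' * y) * exp (- real_of_int k' * t)) 0 10 (u_sol k k') (A_sol k k')"
  unfolding transforms_def
proof (intro conjI allI impI)
  show "part 2 (part 2 (u_sol k k')) x y t + div_form (A_sol k k') (u_sol k k') x y t = 0" for x y t
    using assms by (intro u_sol_pde) auto
  show "u_sol k k' x y t = cos (k * x) * exp (- real_of_int k * t)" if "t \<le> 0" for x y t :: real
    using that by (intro u_sol_initial) simp
  show "u_sol k k' x y t = c_coef k k' * cos (k' * y) * exp (- real_of_int k' * t)"
    if "10 \<le> t" for x y t :: real
    using that by (intro u_sol_final) simp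
qed (auto intro: C2_fun_u_sol periodic2_u_sol C1_fun_A_sol periodic2_A_sol A_sol_eq_id)

theorem mainTheorem9:
  shows "\<exists>C::real. C \<ge> 2 \<and> (\<exists>K M::real. \<forall>k k'::int.
    K \<le> real_of_int k \<and> k < k' \<and> k' \<le> 2 * k \<longrightarrow>
    (let c = exp (- real_of_int k / 2 + 5 * real_of_int k' / 6) in
     \<exists>u A f f' f'' g g' g''.
       transforms (\<lambda>x y t. cos (real_of_int k * x) * exp (- real_of_int k * t))
                  (\<lambda>x y t. c * cos (real_of_int k' * y) * exp (- real_of_int k' * t))
                  0 C u A \<and>
       regclass 80 60 A \<and>
       (\<forall>x y t. t \<in> {0..C} \<longrightarrow>
          u x y t = f t * cos (real_of_int k * x) + g t * cos (real_of_int k' * y)) \<and>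
       (\<forall>t\<in>{0..C}. (f has_real_derivative f' t) (at t within {0..C}) \<and>
                   (f' has_real_derivative f'' t) (at t within {0..C}) \<and>
                   (g has_real_derivative g' t) (at t within {0..C}) \<and>
                   (g' has_real_derivative g'' t) (at t within {0..C})) \<and>
       continuous_on {0..C} f'' \<and> continuous_on {0..C} g'' \<and>
       (\<forall>t\<in>{0..C}.
          \<bar>f t\<bar> \<le> M * exp (- real_of_int k * t) \<and>
          \<bar>f' t\<bar> \<le> M * real_of_int k powr (7/3) * exp (- real_of_int k * t) \<and>
          \<bar>f'' t\<bar> \<le> M * real_of_int k powr (14/3) * exp (- real_of_int k * t) \<and>
          \<bar>g t\<bar> \<le> M * c * exp (- real_of_int k' * t / 3) \<and>
          \<bar>g' t\<bar> \<le> M * real_of_int k' * c * exp (- real_of_int k' * t / 3) \<and>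
          \<bar>g'' t\<bar> \<le> M * (real_of_int k')\<^sup>2 * c * exp (- real_of_int k' * t / 3)) \<and>
       (\<forall>x y t. t \<in> {0..1/100} \<longrightarrow>
          u x y t = cos (real_of_int k * x) * exp (- real_of_int k * t) \<and>
          (\<forall>i<2. \<forall>j<2. A i j x y t = idmat i j)) \<and>
       (\<forall>x y t. t \<in> {C - 1/100..C} \<longrightarrow>
          u x y t = c * cos (real_of_int k' * y) * exp (- real_of_int k' * t) \<and>
          (\<forall>i<2. \<forall>j<2. A i j x y t = idmat i j))))"
  apply (rule exI[of _ 10], rule conjI, simp, rule exI[of _ "10^10"], rule exI[of _ 200], intro allI impI)
  subgoal premises hk for k k'
    unfolding Let_def c_coef_def[symmetric]
    apply (rule exI[of _ "u_sol k k'"], rule exI[of _ "A_sol k k'"],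
        rule exI[of _ "f_amp k"], rule exI[of _ "f_amp' k"], rule exI[of _ "f_amp'' k"],
        rule exI[of _ "g_amp k k'"], rule exI[of _ "g_amp' k k'"], rule exI[of _ "g_amp'' k k'"])
    apply (intro conjI)
    subgoal using hk by (intro u_sol_transforms) auto
    subgoal using hk by (intro regclass_A_sol) auto
    subgoal by (simp add: u_sol_def sepsum_def)
    subgoal by (simp add: f_amp_has_derivative f_amp'_has_derivative g_amp_has_derivative g_amp'_has_derivative)
    subgoal by (rule continuous_on_coefficient_derivs)
    subgoal by (rule continuous_on_coefficient_derivs)
    subgoal using hk by (intro ballI conjI abs_f_amp_le abs_f_amp'_le abs_f_amp''_le abs_g_amp_le
        abs_g_amp'_le abs_g_amp''_le) auto
    subgoal by (auto simp: u_sol_initial A_sol_eq_id)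
    subgoal by (auto simp: u_sol_final A_sol_eq_id)
    done
  done

end
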